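(* Let $0=x_1<\dots<x_N=1$ be a partition of $I=[0,1]$, let $\{q_n\}$ be a sequence in $(0,1]$ with $\lim q_n=1$, and let $\alpha_i$, $i\in\mathbb{N}_{N-1}$, be bounded functions on $I$ with $\|\alpha_i\|_\infty<1$. Let $\{\lambda_i\}_{i\ge1}$ be a sequence of distinct positive real numbers with $\sum_{i=1}^\infty\frac{\lambda_i}{\lambda_i^2+1}=\infty$. Then the set \[ S=\bigcup_{n=1}^\infty\bigcup_{m=1}^\infty\operatorname{span}\{1,(x^{\lambda_1})^{(q_n,\alpha)}_n,\dots,(x^{\lambda_m})^{(q_n,\alpha)}_n\} \] is dense in $C[0,1]$ with respect to the sup-norm (i.e. every $f\in C[0,1]$ is a uniform limit of elements of $S$).
   Context: For $q\in(0,1]$: $[k]_q=\frac{1-q^k}{1-q}$ ($q\ne1$), $[k]_1=k$, $q$-factorials, $\binom{n}{k}_q=\frac{[n]_q!}{[k]_q![n-k]_q!}$. On $[0,1]$ the quantum MKZ operator is $M_{n,q}h(x)=\prod_{j=0}^n(1-q^jx)\sum_{k\ge0}\binom{n+k}{k}_q x^k h\!\left(\frac{[k]_q}{[k+n]_q}\right)$ for $0\le x<1$, $M_{n,q}h(1)=h(1)$. Let $u_i(x)=a_ix+b_i$ be the affine maps with $u_i(0)=x_i$, $u_i(1)=x_{i+1}$, $i\in\mathbb{N}_{N-1}$. For $h\in C[0,1]$, $h^{(q,\alpha)}_n$ denotes the unique bounded function $G:[0,1]\to\mathbb{R}$ with $G(u_i(x))=h(u_i(x))+\alpha_i(x)(G(x)-M_{n,q}h(x))$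 for all $x\in I$, $i\in\mathbb{N}_{N-1}$; $(x^{\lambda})^{(q,\alpha)}_n$ is this function for $h(x)=x^\lambda$. *)

theory Defs
  imports "HOL-Analysis.Analysis"
begin

definition q_int :: "real \<Rightarrow> nat \<Rightarrow> real" where
  "q_int q k = (if q = 1 then real k else (1 - q ^ k) / (1 - q))"

definition q_fact :: "real \<Rightarrow> nat \<Rightarrow> real" where
  "q_fact q n = (\<Prod>k = 1..n. q_int q k)"

definition q_binom :: "real \<Rightarrow> nat \<Rightarrow> nat \<Rightarrow> real" where
  "q_binom q n k = q_fact q n / (q_fact q k * q_fact q (n - k))"

definition MKZ :: "nat \<Rightarrow> real \<Rightarrow> (real \<Rightarrow> real) \<Rightarrow> real \<Rightarrow> real" where
  "MKZ n q h x =
     (if x = 1 then h 1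
      else (\<Prod>j = 0..n. (1 - q ^ j * x)) *
           (\<Sum>k. q_binom q (n + k) k * x ^ k * h (q_int q k / q_int q (k + n))))"

definition affine_u :: "(nat \<Rightarrow> real) \<Rightarrow> nat \<Rightarrow> real \<Rightarrow> real" where
  "affine_u xs i t = (xs (Suc i) - xs i) * t + xs i"

text \<open>The alpha-fractal function h^(q,alpha)_n associated with the partition xs (points
  xs 1 < ... < xs N) and scaling functions alpha i, i = 1..N-1: the unique bounded function
  G on [0,1] satisfying the self-referential equation.  Outside [0,1] it is fixed to 0
  (functions are only considered on [0,1]).\<close>

definition fractal_fun ::
  "nat \<Rightarrow> (nat \<Rightarrow> real) \<Rightarrow> (nat \<Rightarrow> real \<Rightarrow> real) \<Rightarrow> real \<Rightarrow> nat \<Rightarrow> (real \<Rightarrow> real) \<Rightarrow> real \<Rightarrow> real"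
where
  "fractal_fun N xs \<alpha> q n h =
     (THE G. bounded (G ` {0..1}) \<and> (\<forall>x. x \<notin> {0..1} \<longrightarrow> G x = 0) \<and>
        (\<forall>i \<in> {1..N-1}. \<forall>x \<in> {0..1}.
           G (affine_u xs i x) = h (affine_u xs i x) + \<alpha> i x * (G x - MKZ n q h x)))"

end

theory Submission
  imports Defs "HOL-Complex_Analysis.Complex_Analysis"
begin

text \<open>Three approximations are chained.  Muntz's theorem gives \<open>f \<approx> c\<^sub>0 + \<Sum> c\<^sub>i x\<^bsup>\<lambda>\<^sub>i\<^esup>\<close>.  It is
  proved by duality: if \<open>x\<^sup>\<mu>\<close> stays \<open>D\<close>-far from \<open>span {x\<^sup>l | l \<in> K}\<close>, finite signed measures on
  \<open>[0,1]\<close> nearly annihilate every \<open>x\<^sup>l\<close> and give \<open>x\<^sup>\<mu>\<close> mass nearly \<open>D\<close>; their Mellin transforms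
  are bounded holomorphic functions on the disc, so by Schwarz's lemma \<open>D\<close> is at most a Blaschke
  product, which tends to \<open>0\<close> because \<open>\<Sum> \<lambda>\<^sub>i / (\<lambda>\<^sub>i\<^sup>2 + 1)\<close> diverges.  The \<open>q\<close>-MKZ operators
  \<open>M\<^sub>n\<^sub>,\<^sub>q\<^sub>n h\<close> converge uniformly to \<open>h\<close>, by a Korovkin-type estimate from their first two moments.
  Finally the \<open>\<alpha>\<close>-fractal function of \<open>h\<close> is the fixed point of a map contracting with ratio
  \<open>A = max \<parallel>\<alpha>\<^sub>i\<parallel>\<^sub>\<infinity> < 1\<close>, so it differs from \<open>h\<close> by at most \<open>A / (1 - A) \<cdot> \<parallel>h - M\<^sub>n\<^sub>,\<^sub>q h\<parallel>\<^sub>\<infinity>\<close>;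
  hence replacing each \<open>x\<^bsup>\<lambda>\<^sub>i\<^esup>\<close> by its fractal counterpart costs arbitrarily little.\<close>

section \<open>Bounded holomorphic functions with prescribed zeros\<close>

lemma Moebius_denominator_nonzero:
  fixes a z :: complex
  assumes "norm a < 1" "norm z < 1"
  shows "1 - cnj a * z \<noteq> 0"
proof
  assume "1 - cnj a * z = 0"
  then have "norm (cnj a * z) = 1" by (metis eq_iff_diff_eq_0 norm_one)
  moreover have "norm (cnj a * z) < 1"
  proof -
    have "norm a * norm z \<le> norm a" using assms by (simp add: mult_left_le)
    then show ?thesis using assms by (simp add: norm_mult)
  qed
  ultimately show False by simp
qed

lemma Moebius_function_nonzero:
  assumes "norm a < 1" "norm z < 1" "z \<noteq> a"
  shows "Moebius_function 0 a z \<noteq> 0"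
  using assms Moebius_denominator_nonzero[OF assms(1,2)] by (simp add: Moebius_function_simple)

lemma norm_le_norm_Moebius_of_zero:
  fixes g :: "complex \<Rightarrow> complex"
  assumes holg: "g holomorphic_on ball 0 1"
    and bd: "\<And>z. z \<in> ball 0 1 \<Longrightarrow> norm (g z) \<le> 1"
    and a: "norm a < 1" and ga: "g a = 0" and w: "norm w < 1"
  shows "norm (g w) \<le> norm (Moebius_function 0 a w)"
proof -
  define k where "k = g \<circ> Moebius_function 0 (-a)"
  have na: "norm (-a) < 1" using a by simp
  have holk: "k holomorphic_on ball 0 1"
    unfolding k_def using Moebius_function_norm_lt_1[OF na]
    by (intro holomorphic_on_compose_gen[OF Moebius_function_holomorphic[OF na] holg]) auto
  have k0: "k 0 = 0" unfolding k_def using ga by (simp add: Moebius_function_of_zero)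
  have kb: "norm (k z) \<le> 1" if "norm z < 1" for z
    unfolding k_def using bd Moebius_function_norm_lt_1[OF na that] by auto
  define \<xi> where "\<xi> = Moebius_function 0 a w"
  have \<xi>: "norm \<xi> < 1" unfolding \<xi>_def by (rule Moebius_function_norm_lt_1[OF a w])
  have k\<xi>: "k \<xi> = g w" unfolding k_def \<xi>_def
    using Moebius_function_compose[of "-a" a w] a w by simp
  \<comment> \<open>Schwarz's lemma wants values in the open disc, so it is applied to \<open>s * k\<close> for \<open>s < 1\<close>.\<close>
  have "s * norm (k \<xi>) \<le> norm \<xi>" if s: "0 < s" "s < 1" for s
  proof -
    have "norm (of_real s * k \<xi>) \<le> norm \<xi>"
    proof (rule Schwarz_Lemma(1)[where f = "\<lambda>z. of_real s * k z"])
      show "(\<lambda>z. of_real s * k z) holomorphic_on ball 0 1"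
        by (intro holomorphic_intros holk)
      show "norm (of_real s * k z) < 1" if "norm z < 1" for z
      proof -
        have "s * norm (k z) \<le> s * 1" using kb[OF that] s by (intro mult_left_mono) auto
        moreover have "norm (of_real s * k z) = s * norm (k z)" using s by (simp add: norm_mult)
        ultimately show ?thesis using s by linarith
      qed
    qed (use k0 \<xi> in auto)
    then show ?thesis using s by (simp add: norm_mult)
  qed
  then have "norm (k \<xi>) \<le> norm \<xi>" by (rule field_le_mult_one_interval)
  then show ?thesis using k\<xi> \<xi>_def by simp
qed

lemma holomorphic_divide_Moebius:
  fixes g :: "complex \<Rightarrow> complex"
  assumes holg: "g holomorphic_on ball 0 1"
    and bd: "\<And>z. z \<in> ball 0 1 \<Longrightarrow> norm (g z) \<le> 1"
    and a: "norm a < 1" and ga: "g a = 0"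
  obtains h where "h holomorphic_on ball 0 1" "\<And>z. z \<in> ball 0 1 \<Longrightarrow> norm (h z) \<le> 1"
    "\<And>z. z \<in> ball 0 1 \<Longrightarrow> g z = h z * Moebius_function 0 a z"
proof
  define h where
    "h z = (if z = a then deriv g a else (g z - g a) / (z - a)) * (1 - cnj a * z)" for z
  show holh: "h holomorphic_on ball 0 1"
    unfolding h_def using a by (intro holomorphic_intros pole_lemma[OF holg]) auto
  have factor: "g z = h z * Moebius_function 0 a z" if "norm z < 1" for z
    using ga Moebius_denominator_nonzero[OF a that]
    by (cases "z = a") (auto simp: h_def Moebius_function_simple)
  then show "\<And>z. z \<in> ball 0 1 \<Longrightarrow> g z = h z * Moebius_function 0 a z" by simp
  have off_a: "norm (h z) \<le> 1" if "z \<noteq> a" "norm z < 1" for z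
  proof -
    have "norm (h z) * norm (Moebius_function 0 a z) \<le> 1 * norm (Moebius_function 0 a z)"
      using norm_le_norm_Moebius_of_zero[OF holg bd a ga that(2)] factor[OF that(2)]
      by (simp add: norm_mult)
    then show ?thesis
      using Moebius_function_nonzero[OF a that(2,1)] by (simp add: mult_le_cancel_right)
  qed
  show "norm (h z) \<le> 1" if "z \<in> ball 0 1" for z
  proof (cases "z = a")
    case True
    have "isCont h a"
      using holh a by (meson centre_in_ball continuous_on_eq_continuous_at
          holomorphic_on_imp_continuous_on mem_ball_0 open_ball zero_less_one)
    then have lim: "(h \<longlongrightarrow> h a) (at a)" by (simp add: isCont_def)
    have "eventually (\<lambda>z. z \<in> ball 0 1 \<and> z \<noteq> a) (at a)"
      using a by (intro eventually_conj eventually_at_in_open') (auto simp: eventually_at_filter)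
    then have "eventually (\<lambda>z. norm (h z) \<le> 1) (at a)"
      by eventually_elim (use off_a in auto)
    then have "norm (h a) \<le> 1"
      by (rule tendsto_upperbound[OF tendsto_norm[OF lim]]) simp
    then show ?thesis using True by simp
  qed (use off_a that in auto)
qed

lemma norm_le_prod_Moebius_of_zeros:
  fixes g :: "complex \<Rightarrow> complex"
  assumes "finite A" "A \<subseteq> ball 0 1"
    and "g holomorphic_on ball 0 1" "\<And>z. z \<in> ball 0 1 \<Longrightarrow> norm (g z) \<le> 1"
    and "\<And>a. a \<in> A \<Longrightarrow> g a = 0" and w: "norm w < 1"
  shows "norm (g w) \<le> (\<Prod>a\<in>A. norm (Moebius_function 0 a w))"
  using assms(1-5)
proof (induction A arbitrary: g rule: finite_induct)
  case empty
  then show ?case using w by simp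
next
  case (insert a A g)
  have a: "norm a < 1" using insert.prems(1) by auto
  obtain h where holh: "h holomorphic_on ball 0 1" and hb: "\<And>z. z \<in> ball 0 1 \<Longrightarrow> norm (h z) \<le> 1"
    and gh: "\<And>z. z \<in> ball 0 1 \<Longrightarrow> g z = h z * Moebius_function 0 a z"
    using holomorphic_divide_Moebius[OF insert.prems(2,3) a] insert.prems(4) by blast
  have "h b = 0" if "b \<in> A" for b
  proof -
    have b: "norm b < 1" "b \<noteq> a" using that insert.prems(1) insert.hyps(2) by auto
    then show ?thesis
      using gh[of b] insert.prems(4)[of b] that Moebius_function_nonzero[OF a b(1)] by auto
  qed
  then have "norm (h w) \<le> (\<Prod>b\<in>A. norm (Moebius_function 0 b w))"
    using insert.IH[OF _ holh hb] insert.prems(1) by blast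
  then have "norm (h w) * norm (Moebius_function 0 a w)
      \<le> (\<Prod>b\<in>A. norm (Moebius_function 0 b w)) * norm (Moebius_function 0 a w)"
    by (rule mult_right_mono) simp
  then show ?case
    using gh[of w] w insert.hyps by (simp add: norm_mult mult.commute)
qed

section \<open>Muntz's theorem\<close>

lemma sum_sq_diff_le_card:
  fixes x y :: "'j \<Rightarrow> real"
  assumes "\<And>j. j \<in> J \<Longrightarrow> \<bar>x j\<bar> \<le> R" "\<And>j. j \<in> J \<Longrightarrow> \<bar>y j\<bar> \<le> R"
  shows "(\<Sum>j\<in>J. (x j - y j)\<^sup>2) \<le> 4 * R\<^sup>2 * card J"
proof -
  have "(x j - y j)\<^sup>2 \<le> (2 * R)\<^sup>2" if "j \<in> J" for j
    using assms[OF that] by (intro abs_le_square_iff[THEN iffD1]) linarith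
  then have "(\<Sum>j\<in>J. (x j - y j)\<^sup>2) \<le> (\<Sum>j\<in>J. (2 * R)\<^sup>2)" by (rule sum_mono)
  then show ?thesis by (simp add: power2_eq_square mult_ac)
qed

lemma sum_sq_convex_comb:
  fixes x y p :: "'j \<Rightarrow> real"
  shows "(\<Sum>j\<in>J. ((1 - u) * y j + u * x j - p j)\<^sup>2) = (\<Sum>j\<in>J. (y j - p j)\<^sup>2)
    + 2 * u * (\<Sum>j\<in>J. (y j - p j) * (x j - y j)) + u\<^sup>2 * (\<Sum>j\<in>J. (x j - y j)\<^sup>2)"
proof -
  have "((1 - u) * y j + u * x j - p j)\<^sup>2
      = (y j - p j)\<^sup>2 + 2 * u * ((y j - p j) * (x j - y j)) + u\<^sup>2 * (x j - y j)\<^sup>2" for j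
    by (simp add: power2_eq_square algebra_simps)
  then show ?thesis by (simp add: sum.distrib sum_distrib_left)
qed

text \<open>A near-minimiser \<open>y\<close> of the distance to \<open>p\<close> satisfies an approximate variational
  inequality, and \<open>y - p\<close> is the separating functional.\<close>

lemma separation_from_convex_finite:
  fixes C :: "('j \<Rightarrow> real) set" and J :: "'j set" and p :: "'j \<Rightarrow> real"
  assumes C: "C \<noteq> {}"
    and convex: "\<And>x y u. x \<in> C \<Longrightarrow> y \<in> C \<Longrightarrow> 0 \<le> u \<Longrightarrow> u \<le> 1 \<Longrightarrow>
      (\<lambda>j. (1 - u) * y j + u * x j) \<in> C"
    and bounded: "\<And>x j. x \<in> C \<Longrightarrow> j \<in> J \<Longrightarrow> \<bar>x j\<bar> \<le> R"
    and far: "\<And>x. x \<in> C \<Longrightarrow> e \<le> (\<Sum>j\<in>J. (x j - p j)\<^sup>2)" and e: "e > 0"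
  obtains a \<beta> where "\<beta> > 0" "\<And>x. x \<in> C \<Longrightarrow> \<beta> \<le> (\<Sum>j\<in>J. a j * (x j - p j))"
proof -
  define \<Phi> where "\<Phi> x = (\<Sum>j\<in>J. (x j - p j)\<^sup>2)" for x
  define \<delta> where "\<delta> = Inf (\<Phi> ` C)"
  have bdd: "bdd_below (\<Phi> ` C)"
    unfolding \<Phi>_def by (intro bdd_belowI[of _ 0]) (auto intro: sum_nonneg)
  have \<delta>_le: "\<delta> \<le> \<Phi> x" if "x \<in> C" for x
    unfolding \<delta>_def using that bdd by (intro cInf_lower) auto
  have "e \<le> \<delta>" unfolding \<delta>_def using C far by (intro cInf_greatest) (auto simp: \<Phi>_def)
  then have \<delta>: "\<delta> > 0" using e by simp
  define Q where "Q = 4 * R\<^sup>2 * card J + 1"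
  have Q: "Q > 0" unfolding Q_def by (simp add: add_nonneg_pos)
  define u where "u = min 1 (\<delta> / (2 * Q))"
  have u: "0 < u" "u \<le> 1" "u * Q \<le> \<delta> / 2"
    unfolding u_def using \<delta> Q by (auto simp: min_def field_simps)
  obtain y where y: "y \<in> C" "\<Phi> y < \<delta> + u * \<delta> / 2"
  proof -
    have "Inf (\<Phi> ` C) < \<delta> + u * \<delta> / 2" using u \<delta> \<delta>_def by simp
    then show ?thesis using cInf_lessD[of "\<Phi> ` C"] C that by blast
  qed
  show ?thesis
  proof
    show "\<delta> / 2 > 0" using \<delta> by simp
    fix x assume x: "x \<in> C"
    define S where "S = (\<Sum>j\<in>J. (y j - p j) * (x j - y j))"
    have "u\<^sup>2 * (\<Sum>j\<in>J. (x j - y j)\<^sup>2) \<le> u * (u * Q)"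
      using sum_sq_diff_le_card[of J x R y] bounded x y(1) u
      by (simp add: Q_def power2_eq_square mult_left_mono)
    moreover have "\<delta> \<le> \<Phi> (\<lambda>j. (1 - u) * y j + u * x j)"
      using convex[OF x y(1)] u by (intro \<delta>_le) auto
    ultimately have "0 < u * (\<delta> / 2 + 2 * S + u * Q)"
      using y(2) sum_sq_convex_comb[of u y x p J] by (simp add: \<Phi>_def S_def algebra_simps)
    then have "S > - \<delta> / 2" using u by (simp add: zero_less_mult_iff)
    moreover have "(y j - p j) * (x j - p j) = (y j - p j) * (x j - y j) + (y j - p j)\<^sup>2" for j
      by (simp add: power2_eq_square algebra_simps)
    then have "(\<Sum>j\<in>J. (y j - p j) * (x j - p j)) = S + \<Phi> y"
      unfolding S_def \<Phi>_def by (simp add: sum.distrib)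
    ultimately show "\<delta> / 2 \<le> (\<Sum>j\<in>J. (y j - p j) * (x j - p j))" using \<delta>_le[OF y(1)] by linarith
  qed
qed

text \<open>A finite signed measure \<open>\<Sum> c \<delta>\<^sub>t\<close> is represented by the list of its (weight, point) pairs.\<close>

definition moment :: "(real \<times> real) list \<Rightarrow> real \<Rightarrow> real" where
  "moment \<nu> l = (\<Sum>p\<leftarrow>\<nu>. fst p * snd p powr l)"

definition total_variation :: "(real \<times> real) list \<Rightarrow> real" where
  "total_variation \<nu> = (\<Sum>p\<leftarrow>\<nu>. \<bar>fst p\<bar>)"

definition admissible :: "(real \<times> real) list \<Rightarrow> bool" where
  "admissible \<nu> \<longleftrightarrow> (\<forall>p\<in>set \<nu>. snd p \<in> {0..1}) \<and> total_variation \<nu> \<le> 1"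

definition mix :: "real \<Rightarrow> (real \<times> real) list \<Rightarrow> (real \<times> real) list \<Rightarrow> (real \<times> real) list" where
  "mix u \<nu> \<nu>' = map (\<lambda>p. ((1 - u) * fst p, snd p)) \<nu> @ map (\<lambda>p. (u * fst p, snd p)) \<nu>'"

lemma moment_mix: "moment (mix u \<nu> \<nu>') l = (1 - u) * moment \<nu> l + u * moment \<nu>' l"
  by (simp add: moment_def mix_def o_def sum_list_const_mult mult.assoc)

lemma admissible_mix:
  assumes "admissible \<nu>" "admissible \<nu>'" "0 \<le> u" "u \<le> 1"
  shows "admissible (mix u \<nu> \<nu>')"
proof -
  have "total_variation (mix u \<nu> \<nu>') = (1 - u) * total_variation \<nu> + u * total_variation \<nu>'"
    using assms(3,4)
    by (simp add: total_variation_def mix_def o_def sum_list_const_mult abs_mult)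
  also have "\<dots> \<le> (1 - u) * 1 + u * 1"
    using assms unfolding admissible_def by (intro add_mono mult_left_mono) auto
  finally show ?thesis using assms unfolding admissible_def mix_def by auto
qed

lemma abs_moment_le:
  assumes "admissible \<nu>" "0 \<le> l"
  shows "\<bar>moment \<nu> l\<bar> \<le> 1"
proof -
  have "\<bar>moment \<nu> l\<bar> \<le> total_variation \<nu>" if "\<forall>p\<in>set \<nu>. snd p \<in> {0..1}"
    using that
  proof (induction \<nu>)
    case (Cons p \<nu>)
    have "\<bar>fst p * snd p powr l\<bar> \<le> \<bar>fst p\<bar>"
      using Cons.prems assms(2) by (simp add: abs_mult mult_left_le powr_le1)
    then show ?case
      using Cons by (simp add: moment_def total_variation_def abs_triangle_ineq[THEN order_trans])
  qed (simp add: moment_def total_variation_def)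
  then show ?thesis using assms(1) unfolding admissible_def by auto
qed

lemma moment_point_mass [simp]: "moment [(c, t)] l = c * t powr l"
  by (simp add: moment_def)

lemma admissible_point_mass: "t \<in> {0..1} \<Longrightarrow> \<bar>c\<bar> \<le> 1 \<Longrightarrow> admissible [(c, t)]"
  by (simp add: admissible_def total_variation_def)

lemma moment_vectors_convex:
  assumes "x \<in> moment ` Collect admissible" "y \<in> moment ` Collect admissible" "0 \<le> u" "u \<le> 1"
  shows "(\<lambda>j. (1 - u) * y j + u * x j) \<in> moment ` Collect admissible"
proof -
  obtain \<nu> \<nu>' where "admissible \<nu>" "x = moment \<nu>" "admissible \<nu>'" "y = moment \<nu>'"
    using assms(1,2) by blast
  then have "admissible (mix u \<nu>' \<nu>)" "(\<lambda>j. (1 - u) * y j + u * x j) = moment (mix u \<nu>' \<nu>)"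
    using assms(3,4) by (simp_all add: admissible_mix fun_eq_iff moment_mix)
  then show ?thesis by blast
qed

lemma approx_of_point_mass_separation:
  fixes K :: "real set" and a :: "real \<Rightarrow> real"
  assumes D: "D > 0" and \<beta>: "\<beta> > 0"
    and sep: "\<And>c t. t \<in> {0..1} \<Longrightarrow> \<bar>c\<bar> \<le> 1 \<Longrightarrow>
      \<beta> \<le> c * (a \<mu> * t powr \<mu> + (\<Sum>l\<in>K. a l * t powr l)) - a \<mu> * D"
  shows "\<exists>b. \<forall>t\<in>{0..1}. \<bar>t powr \<mu> - (\<Sum>l\<in>K. b l * t powr l)\<bar> < D"
proof
  define g where "g t = a \<mu> * t powr \<mu> + (\<Sum>l\<in>K. a l * t powr l)" for t
  have g_bound: "\<bar>g t\<bar> \<le> - a \<mu> * D - \<beta>" if "t \<in> {0..1}" for t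
  proof -
    have "\<beta> \<le> g t - a \<mu> * D" "\<beta> \<le> - g t - a \<mu> * D"
      using sep[OF that, of 1] sep[OF that, of "-1"] by (simp_all add: g_def)
    then show ?thesis by linarith
  qed
  have "a \<mu> * D < 0" using g_bound[of 0] abs_ge_zero[of "g 0"] \<beta> by simp
  then have a\<mu>: "a \<mu> < 0" using D by (simp add: mult_less_0_iff)
  define b where "b l = - a l / a \<mu>" for l
  show "\<forall>t\<in>{0..1}. \<bar>t powr \<mu> - (\<Sum>l\<in>K. b l * t powr l)\<bar> < D"
  proof
    fix t :: real assume t: "t \<in> {0..1}"
    have "a \<mu> * (b l * t powr l) = - (a l * t powr l)" for l
      using a\<mu> by (simp add: b_def field_simps)
    then have "g t = a \<mu> * (t powr \<mu> - (\<Sum>l\<in>K. b l * t powr l))"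
      by (simp add: g_def right_diff_distrib sum_distrib_left sum_negf)
    then have "\<bar>g t\<bar> = - a \<mu> * \<bar>t powr \<mu> - (\<Sum>l\<in>K. b l * t powr l)\<bar>"
      using a\<mu> by (simp add: abs_mult)
    then have "- a \<mu> * \<bar>t powr \<mu> - (\<Sum>l\<in>K. b l * t powr l)\<bar> < - a \<mu> * D"
      using g_bound[OF t] \<beta> by linarith
    then show "\<bar>t powr \<mu> - (\<Sum>l\<in>K. b l * t powr l)\<bar> < D"
      using a\<mu> by (simp add: mult_less_cancel_left_pos)
  qed
qed

text \<open>The finite-dimensional stand-in for the Hahn--Banach step of Muntz's theorem.  If no
  admissible measure works, the moment vectors stay away from \<open>(0, \<dots>, 0, D)\<close>, and a separating
  functional, tested on point masses, is a better approximation of \<open>t\<^sup>\<mu>\<close> than allowed.\<close>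

lemma admissible_moments_approx:
  fixes K :: "real set" and \<mu> D \<eta> :: real
  assumes K: "finite K" "K \<subseteq> {0<..}" and \<mu>: "\<mu> > 0" "\<mu> \<notin> K" and D: "D > 0"
    and far: "\<And>b. \<exists>t\<in>{0..1}. D \<le> \<bar>t powr \<mu> - (\<Sum>l\<in>K. b l * t powr l)\<bar>"
    and \<eta>: "\<eta> > 0"
  obtains \<nu> where "admissible \<nu>" "\<And>l. l \<in> K \<Longrightarrow> \<bar>moment \<nu> l\<bar> < \<eta>" "\<bar>moment \<nu> \<mu> - D\<bar> < \<eta>"
proof (rule ccontr)
  note witness = that
  assume none: "\<not> thesis"
  define J where "J = insert \<mu> K"
  define p where "p j = (if j = \<mu> then D else 0)" for j
  have J: "finite J" "\<And>j. j \<in> J \<Longrightarrow> 0 \<le> j" unfolding J_def using K \<mu> by auto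
  have far_C: "\<eta>\<^sup>2 \<le> (\<Sum>j\<in>J. (x j - p j)\<^sup>2)" if "x \<in> moment ` Collect admissible" for x
  proof (rule ccontr)
    assume "\<not> ?thesis"
    then have "(x j - p j)\<^sup>2 < \<eta>\<^sup>2" if "j \<in> J" for j
      using member_le_sum[OF that, of "\<lambda>j. (x j - p j)\<^sup>2"] J(1) by fastforce
    then have close: "\<bar>x j - p j\<bar> < \<eta>" if "j \<in> J" for j
      using that abs_le_square_iff[of \<eta> "x j - p j"] \<eta> by fastforce
    obtain \<nu> where \<nu>: "admissible \<nu>" "x = moment \<nu>" using \<open>x \<in> _\<close> by blast
    have "\<bar>moment \<nu> l\<bar> < \<eta>" if "l \<in> K" for l
      using close[of l] that \<mu>(2) \<nu>(2) by (auto simp: J_def p_def split: if_splits)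
    moreover have "\<bar>moment \<nu> \<mu> - D\<bar> < \<eta>" using close[of \<mu>] \<nu>(2) by (simp add: J_def p_def)
    ultimately show False using witness[OF \<nu>(1)] none by blast
  qed
  obtain a \<beta> where \<beta>: "\<beta> > 0"
    and sep: "\<And>x. x \<in> moment ` Collect admissible \<Longrightarrow> \<beta> \<le> (\<Sum>j\<in>J. a j * (x j - p j))"
    by (rule separation_from_convex_finite[where C = "moment ` Collect admissible" and J = J
          and p = p and R = 1 and e = "\<eta>\<^sup>2"])
      (use J abs_moment_le admissible_point_mass[of 0 0] moment_vectors_convex far_C \<eta> that in auto)
  have "(\<Sum>j\<in>J. a j * p j) = (\<Sum>j\<in>J. if j = \<mu> then a \<mu> * D else 0)"
    by (intro sum.cong) (auto simp: p_def)
  then have ap: "(\<Sum>j\<in>J. a j * p j) = a \<mu> * D" using J(1) by (simp add: J_def)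
  have "\<beta> \<le> c * (a \<mu> * t powr \<mu> + (\<Sum>l\<in>K. a l * t powr l)) - a \<mu> * D"
    if "t \<in> {0..1}" "\<bar>c\<bar> \<le> 1" for c t
  proof -
    have "moment [(c, t)] \<in> moment ` Collect admissible" using admissible_point_mass[OF that] by blast
    from sep[OF this] have "\<beta> \<le> (\<Sum>j\<in>J. a j * (c * t powr j - p j))" by simp
    also have "\<dots> = c * (a \<mu> * t powr \<mu> + (\<Sum>l\<in>K. a l * t powr l)) - a \<mu> * D"
      using K(1) \<mu>(2) unfolding ap[symmetric]
      by (simp add: J_def algebra_simps sum_subtractf sum_distrib_left)
    finally show ?thesis .
  qed
  then obtain b where "\<forall>t\<in>{0..1}. \<bar>t powr \<mu> - (\<Sum>l\<in>K. b l * t powr l)\<bar> < D"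
    using approx_of_point_mass_separation[OF D \<beta>] by blast
  then show False using far[of b] by force
qed

definition cayley :: "complex \<Rightarrow> complex" where
  "cayley w = (1 + w) / (1 - w)"

text \<open>The Mellin transform \<open>z \<mapsto> \<integral> t\<^sup>z d\<nu>\<close> of a measure, pulled back from the right half plane to
  the unit disc by the Cayley map.\<close>

definition moment_transform :: "(real \<times> real) list \<Rightarrow> complex \<Rightarrow> complex" where
  "moment_transform \<nu> w = (\<Sum>p\<leftarrow>\<nu>. of_real (fst p) * of_real (snd p) powr cayley w)"

lemma Re_cayley_pos:
  assumes "norm w < 1"
  shows "Re (cayley w) > 0"
proof -
  have "Re (cayley w) = (1 - (Re w)\<^sup>2 - (Im w)\<^sup>2) / ((Re (1 - w))\<^sup>2 + (Im (1 - w))\<^sup>2)"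
    unfolding cayley_def Re_divide by (simp add: power2_eq_square algebra_simps)
  moreover have "(Re w)\<^sup>2 + (Im w)\<^sup>2 < 1"
    using assms by (simp add: abs_square_less_1 flip: cmod_power2)
  moreover have "w \<noteq> 1" using assms by auto
  then have "(Re (1 - w))\<^sup>2 + (Im (1 - w))\<^sup>2 > 0"
    by (metis complex_eq_iff sum_power2_gt_zero_iff right_minus_eq zero_complex.simps)
  ultimately show ?thesis by simp
qed

definition cayley_inv :: "real \<Rightarrow> complex" where
  "cayley_inv l = of_real ((l - 1) / (l + 1))"

lemma cayley_cayley_inv:
  assumes "l > 0"
  shows "cayley (cayley_inv l) = of_real l"
proof -
  have l: "of_real l + 1 \<noteq> (0 :: complex)"
    using assms by (metis of_real_1 of_real_add of_real_eq_0_iff add_pos_pos zero_less_one less_irrefl)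
  have "1 + (of_real l - 1) / (of_real l + 1) = 2 * of_real l / (of_real l + (1 :: complex))"
    and "1 - (of_real l - 1) / (of_real l + 1) = 2 / (of_real l + (1 :: complex))"
    using l by (simp_all add: field_simps)
  then show ?thesis using l by (simp add: cayley_def cayley_inv_def)
qed

lemma norm_cayley_inv_less_1: "l > 0 \<Longrightarrow> norm (cayley_inv l) < 1"
  by (simp only: cayley_inv_def norm_of_real) (simp add: abs_less_iff field_simps)

lemma inj_on_cayley_inv: "inj_on cayley_inv {0<..}"
proof (rule inj_onI)
  fix l m :: real assume "l \<in> {0<..}" "m \<in> {0<..}" "cayley_inv l = cayley_inv m"
  then have "(l - 1) / (l + 1) = (m - 1) / (m + 1)" "l + 1 > 0" "m + 1 > 0"
    by (auto simp only: cayley_inv_def of_real_eq_iff)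
  then show "l = m" by (simp add: field_simps)
qed

lemma moment_transform_holomorphic: "moment_transform \<nu> holomorphic_on ball 0 1"
proof -
  have "cayley holomorphic_on ball 0 1"
    unfolding cayley_def by (intro holomorphic_intros) auto
  then have "(\<lambda>w. of_real (fst p) * of_real (snd p) powr cayley w) holomorphic_on ball 0 1" for p
    by (intro holomorphic_intros)
  then show ?thesis
    unfolding moment_transform_def by (induction \<nu>) (auto intro: holomorphic_on_add)
qed

lemma norm_moment_transform_le:
  assumes "admissible \<nu>" "norm w < 1"
  shows "norm (moment_transform \<nu> w) \<le> 1"
proof -
  have Re: "0 \<le> Re (cayley w)" using Re_cayley_pos[OF assms(2)] by simp
  have "norm (moment_transform \<nu> w) \<le> total_variation \<nu>" if "\<forall>p\<in>set \<nu>. snd p \<in> {0..1}"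
    using that
  proof (induction \<nu>)
    case (Cons p \<nu>)
    have "norm (of_real (snd p) powr cayley w) \<le> 1"
      using Cons.prems Re by (simp add: norm_powr_real_powr powr_le1)
    then have "norm (of_real (fst p) * of_real (snd p) powr cayley w) \<le> \<bar>fst p\<bar>"
      by (simp add: norm_mult mult_left_le)
    then show ?case
      using Cons by (simp add: moment_transform_def total_variation_def)
        (smt (verit) norm_triangle_ineq)
  qed (simp add: moment_transform_def total_variation_def)
  then show ?thesis using assms(1) unfolding admissible_def by auto
qed

lemma moment_transform_cayley_inv:
  assumes "admissible \<nu>" "l > 0"
  shows "moment_transform \<nu> (cayley_inv l) = of_real (moment \<nu> l)"
proof -
  have "\<forall>p\<in>set \<nu>. snd p \<in> {0..1}" using assms(1) unfolding admissible_def by auto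
  then show ?thesis
    unfolding moment_transform_def cayley_cayley_inv[OF assms(2)]
    by (induction \<nu>) (simp_all add: moment_def powr_of_real)
qed

lemma norm_Moebius_cayley_inv:
  assumes "l > 0" "m > 0"
  shows "norm (Moebius_function 0 (cayley_inv l) (cayley_inv m)) = \<bar>m - l\<bar> / (m + l)"
proof -
  have real: "Moebius_function 0 (of_real A) (of_real M) = of_real ((M - A) / (1 - A * M))" for A M
    by (simp add: Moebius_function_simple)
  have "((m - 1) / (m + 1) - (l - 1) / (l + 1)) / (1 - (l - 1) / (l + 1) * ((m - 1) / (m + 1)))
      = (m - l) / (m + l)"
    using assms by (simp add: divide_simps) (simp add: algebra_simps)
  then show ?thesis using assms by (simp only: cayley_inv_def real norm_of_real) (simp add: abs_div)
qed

lemma moment_transform_subseq_limit: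
  assumes adm: "\<And>j. admissible (\<nu> j)"
  obtains g r where "g holomorphic_on ball 0 1" "strict_mono (r :: nat \<Rightarrow> nat)"
    "\<And>w. w \<in> ball 0 1 \<Longrightarrow> (\<lambda>j. moment_transform (\<nu> (r j)) w) \<longlonglongrightarrow> g w"
    "\<And>w. w \<in> ball 0 1 \<Longrightarrow> norm (g w) \<le> 1"
proof -
  define H where "H = {h. h holomorphic_on ball 0 1 \<and> (\<forall>z\<in>ball 0 1. norm (h z) \<le> 1)}"
  obtain g r where "g holomorphic_on ball 0 1" "strict_mono (r :: nat \<Rightarrow> nat)"
    and lim: "\<And>w. w \<in> ball 0 1 \<Longrightarrow> (\<lambda>j. moment_transform (\<nu> (r j)) w) \<longlonglongrightarrow> g w"
  proof (rule Montel[of "ball 0 1" H "\<lambda>j. moment_transform (\<nu> j)"])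
    show "range (\<lambda>j. moment_transform (\<nu> j)) \<subseteq> H"
      unfolding H_def using moment_transform_holomorphic norm_moment_transform_le adm by auto
    show "\<exists>B. \<forall>h\<in>H. \<forall>z\<in>S. norm (h z) \<le> B" if "S \<subseteq> ball 0 1" for S
      using that unfolding H_def by (intro exI[of _ 1]) auto
  qed (auto simp: H_def)
  moreover have "norm (g w) \<le> 1" if "w \<in> ball 0 1" for w
    using that norm_moment_transform_le[OF adm]
    by (intro tendsto_upperbound[OF tendsto_norm[OF lim[OF that]]] always_eventually) auto
  ultimately show ?thesis using that by blast
qed

text \<open>By Schwarz's lemma the limit of the transforms, which vanishes at the points \<open>cayley_inv l\<close>,
  is dominated by the Blaschke product with these zeros.\<close>

lemma moments_limit_le_prod:
  fixes K :: "real set" and \<nu> :: "nat \<Rightarrow> (real \<times> real) list"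
  assumes K: "finite K" "K \<subseteq> {0<..}" and \<mu>: "\<mu> > 0"
    and adm: "\<And>j. admissible (\<nu> j)"
    and zero: "\<And>l. l \<in> K \<Longrightarrow> (\<lambda>j. moment (\<nu> j) l) \<longlonglongrightarrow> 0"
    and D: "(\<lambda>j. moment (\<nu> j) \<mu>) \<longlonglongrightarrow> D"
  shows "\<bar>D\<bar> \<le> (\<Prod>l\<in>K. \<bar>\<mu> - l\<bar> / (\<mu> + l))"
proof -
  obtain g r where holg: "g holomorphic_on ball 0 1" and r: "strict_mono (r :: nat \<Rightarrow> nat)"
    and lim: "\<And>w. w \<in> ball 0 1 \<Longrightarrow> (\<lambda>j. moment_transform (\<nu> (r j)) w) \<longlonglongrightarrow> g w"
    and g_le: "\<And>w. w \<in> ball 0 1 \<Longrightarrow> norm (g w) \<le> 1"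
    using moment_transform_subseq_limit[of \<nu>, OF adm] by blast
  have g_cayley_inv: "g (cayley_inv l) = of_real c"
    if l: "l > 0" and c: "(\<lambda>j. moment (\<nu> j) l) \<longlonglongrightarrow> c" for l c
  proof -
    have "(\<lambda>j. moment_transform (\<nu> (r j)) (cayley_inv l)) = (\<lambda>j. of_real (moment (\<nu> j) l)) \<circ> r"
      using moment_transform_cayley_inv[OF adm l] by auto
    then have "(\<lambda>j. moment_transform (\<nu> (r j)) (cayley_inv l)) \<longlonglongrightarrow> of_real c"
      using LIMSEQ_subseq_LIMSEQ[OF tendsto_of_real[OF c] r] by simp
    moreover have "cayley_inv l \<in> ball 0 1" using norm_cayley_inv_less_1[OF l] by simp
    ultimately show ?thesis using LIMSEQ_unique lim by blast
  qed
  have "norm (g (cayley_inv \<mu>)) \<le> (\<Prod>a\<in>cayley_inv ` K. norm (Moebius_function 0 a (cayley_inv \<mu>)))"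
  proof (rule norm_le_prod_Moebius_of_zeros)
    show "g a = 0" if a: "a \<in> cayley_inv ` K" for a
    proof -
      obtain l where "l \<in> K" "a = cayley_inv l" using a by blast
      then show ?thesis using g_cayley_inv[OF _ zero] K(2) by auto
    qed
  qed (use K holg g_le norm_cayley_inv_less_1 \<mu> in auto)
  also have "\<dots> = (\<Prod>l\<in>K. norm (Moebius_function 0 (cayley_inv l) (cayley_inv \<mu>)))"
    using inj_on_subset[OF inj_on_cayley_inv K(2)] by (rule prod.reindex_cong) auto
  also have "\<dots> = (\<Prod>l\<in>K. \<bar>\<mu> - l\<bar> / (\<mu> + l))"
    using K(2) \<mu> by (intro prod.cong refl norm_Moebius_cayley_inv) auto
  finally show ?thesis using g_cayley_inv[OF \<mu> D] by simp
qed

lemma Muntz_distance_bound: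
  fixes K :: "real set"
  assumes K: "finite K" "K \<subseteq> {0<..}" and \<mu>: "\<mu> > 0" and \<epsilon>: "\<epsilon> > 0"
  obtains b where "\<And>t. t \<in> {0..1} \<Longrightarrow>
    \<bar>t powr \<mu> - (\<Sum>l\<in>K. b l * t powr l)\<bar> < (\<Prod>l\<in>K. \<bar>\<mu> - l\<bar> / (\<mu> + l)) + \<epsilon>"
proof -
  have prod: "(\<Prod>l\<in>K. \<bar>\<mu> - l\<bar> / (\<mu> + l)) \<ge> 0" using K \<mu> by (intro prod_nonneg) auto
  show ?thesis
  proof (cases "\<mu> \<in> K")
    case True
    have "(\<Sum>l\<in>K. (if l = \<mu> then 1 else 0) * t powr l) = t powr \<mu>" for t
    proof -
      have "(\<Sum>l\<in>K. (if l = \<mu> then 1 else 0) * t powr l) = (\<Sum>l\<in>K. if l = \<mu> then t powr \<mu> else 0)"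
        by (rule sum.cong) auto
      then show ?thesis using K(1) True by simp
    qed
    then show ?thesis using prod \<epsilon> by (intro that[of "\<lambda>l. if l = \<mu> then 1 else 0"]) auto
  next
    case False
    define D where "D = (\<Prod>l\<in>K. \<bar>\<mu> - l\<bar> / (\<mu> + l)) + \<epsilon>"
    have "D > 0" unfolding D_def using prod \<epsilon> by linarith
    show ?thesis
    proof (rule ccontr)
      assume none: "\<not> thesis"
      have far: "\<exists>t\<in>{0..1}. D \<le> \<bar>t powr \<mu> - (\<Sum>l\<in>K. b l * t powr l)\<bar>" for b
      proof (rule ccontr)
        assume "\<not> ?thesis"
        then show False using that[of b] none by (auto simp: D_def not_le)
      qed
      have "\<exists>\<nu>. admissible \<nu> \<and> (\<forall>l\<in>K. \<bar>moment \<nu> l\<bar> < 1 / Suc j)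
          \<and> \<bar>moment \<nu> \<mu> - D\<bar> < 1 / Suc j" for j
        by (rule admissible_moments_approx[OF K \<mu> False \<open>D > 0\<close> far, of "1 / Suc j"]) auto
      then obtain \<nu> where adm: "\<And>j. admissible (\<nu> j)"
        and small: "\<And>j l. l \<in> K \<Longrightarrow> \<bar>moment (\<nu> j) l\<bar> < 1 / Suc j"
        and close: "\<And>j. \<bar>moment (\<nu> j) \<mu> - D\<bar> < 1 / Suc j"
        by metis
      have to0: "(\<lambda>j. 1 / real (Suc j)) \<longlonglongrightarrow> 0"
        using LIMSEQ_Suc[OF lim_inverse_n'] by (simp add: inverse_eq_divide)
      have "(\<lambda>j. moment (\<nu> j) l) \<longlonglongrightarrow> 0" if "l \<in> K" for l
        by (rule Lim_null_comparison[OF always_eventually to0])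
          (use small[OF that] in \<open>auto intro: less_imp_le\<close>)
      moreover have "(\<lambda>j. moment (\<nu> j) \<mu>) \<longlonglongrightarrow> D"
        by (rule Lim_null_comparison[OF always_eventually to0, THEN LIM_zero_cancel])
          (use close in \<open>auto intro: less_imp_le\<close>)
      ultimately have "\<bar>D\<bar> \<le> (\<Prod>l\<in>K. \<bar>\<mu> - l\<bar> / (\<mu> + l))"
        by (rule moments_limit_le_prod[OF K \<mu> adm])
      then show False using \<epsilon> by (simp add: D_def)
    qed
  qed
qed

lemma Muntz_factor_le_exp:
  fixes \<mu> l :: real
  assumes "\<mu> > 0" "l > 0"
  shows "\<bar>\<mu> - l\<bar> / (\<mu> + l) \<le> exp (- min (1/\<mu>) \<mu> * (l / (l\<^sup>2 + 1)))"
proof -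
  define \<kappa> where "\<kappa> = min (1/\<mu>) \<mu>"
  have main: "\<kappa> * (l / (l\<^sup>2 + 1)) \<le> 1 - \<bar>\<mu> - l\<bar> / (\<mu> + l)"
  proof (cases "l \<le> \<mu>")
    case True
    have "1 - \<bar>\<mu> - l\<bar> / (\<mu> + l) = 2 * l / (\<mu> + l)"
      using True assms by (simp add: field_simps)
    also have "\<dots> \<ge> l / \<mu>" using True assms by (simp add: field_simps)
    moreover have "l / \<mu> \<ge> (1/\<mu>) * (l / (l\<^sup>2 + 1))"
    proof -
      have "l / (l\<^sup>2 + 1) \<le> l" using assms by (simp add: power2_eq_square divide_le_eq)
      then have "(1/\<mu>) * (l / (l\<^sup>2 + 1)) \<le> (1/\<mu>) * l" using assms by (intro mult_left_mono) auto
      then show ?thesis by simp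
    qed
    moreover have "(1/\<mu>) * (l / (l\<^sup>2 + 1)) \<ge> \<kappa> * (l / (l\<^sup>2 + 1))"
      unfolding \<kappa>_def using assms by (intro mult_right_mono) auto
    ultimately show ?thesis by linarith
  next
    case False
    have "1 - \<bar>\<mu> - l\<bar> / (\<mu> + l) = 2 * \<mu> / (\<mu> + l)"
      using False assms by (simp add: field_simps)
    also have "\<dots> \<ge> \<mu> / l" using False assms by (simp add: field_simps)
    moreover have "\<mu> / l \<ge> \<mu> * (l / (l\<^sup>2 + 1))"
    proof -
      have "l / (l\<^sup>2 + 1) \<le> l / l\<^sup>2" using assms by (intro divide_left_mono mult_pos_pos add_pos_pos) auto
      also have "l / l\<^sup>2 = 1 / l" using assms by (simp add: power2_eq_square)
      finally have "l / (l\<^sup>2 + 1) \<le> 1 / l" .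
      then show ?thesis using assms by (metis divide_inverse inverse_eq_divide mult_left_mono less_imp_le)
    qed
    moreover have "\<mu> * (l / (l\<^sup>2 + 1)) \<ge> \<kappa> * (l / (l\<^sup>2 + 1))"
      unfolding \<kappa>_def using assms by (intro mult_right_mono) auto
    ultimately show ?thesis by linarith
  qed
  have "\<bar>\<mu> - l\<bar> / (\<mu> + l) \<le> 1 - \<kappa> * (l / (l\<^sup>2 + 1))" using main by linarith
  also have "\<dots> \<le> exp (- (\<kappa> * (l / (l\<^sup>2 + 1))))" using exp_ge_add_one_self[of "- (\<kappa> * (l / (l\<^sup>2 + 1)))"] by simp
  finally show ?thesis unfolding \<kappa>_def by simp
qed

lemma eventually_Muntz_product_less:
  fixes lam :: "nat \<Rightarrow> real"
  assumes pos: "\<And>i. i \<ge> 1 \<Longrightarrow> lam i > 0"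
    and div: "\<not> summable (\<lambda>i. lam (Suc i) / ((lam (Suc i))\<^sup>2 + 1))"
    and \<mu>: "\<mu> > 0" and \<epsilon>: "\<epsilon> > 0"
  shows "eventually (\<lambda>n. (\<Prod>i\<in>{1..n}. \<bar>\<mu> - lam i\<bar> / (\<mu> + lam i)) < \<epsilon>) sequentially"
proof -
  define \<kappa> where "\<kappa> = min (1/\<mu>) \<mu>"
  have \<kappa>: "\<kappa> > 0" unfolding \<kappa>_def using \<mu> by simp
  define w where "w i = lam (Suc i) / ((lam (Suc i))\<^sup>2 + 1)" for i
  have w0: "w i \<ge> 0" for i unfolding w_def using pos[of "Suc i"] by simp
  obtain N where N: "sum w {..<N} > - ln \<epsilon> / \<kappa>"
  proof (rule ccontr)
    assume "\<not> thesis"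
    then have "\<forall>N. sum w {..<N} \<le> - ln \<epsilon> / \<kappa>" using that by (meson not_le)
    then have "summable w" using w0 by (intro summableI_nonneg_bounded) auto
    then show False using div unfolding w_def by simp
  qed
  show ?thesis
  proof (rule eventually_sequentiallyI[of N])
    fix n assume n: "N \<le> n"
    have mono: "sum w {..<N} \<le> sum w {..<n}" using n w0 by (intro sum_mono2) auto
    have "(\<Prod>i\<in>{1..n}. \<bar>\<mu> - lam i\<bar> / (\<mu> + lam i))
        \<le> (\<Prod>i\<in>{1..n}. exp (- \<kappa> * (lam i / ((lam i)\<^sup>2 + 1))))"
      unfolding \<kappa>_def using pos \<mu>
      by (intro prod_mono conjI Muntz_factor_le_exp) (auto intro!: divide_nonneg_pos add_pos_pos)
    also have "\<dots> = exp (- \<kappa> * (\<Sum>i\<in>{1..n}. lam i / ((lam i)\<^sup>2 + 1)))"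
      by (simp add: exp_sum sum_distrib_left)
    also have "(\<Sum>i\<in>{1..n}. lam i / ((lam i)\<^sup>2 + 1)) = sum w {..<n}"
      unfolding w_def by (simp add: sum.atLeast1_atMost_eq)
    also have "exp (- \<kappa> * sum w {..<n}) \<le> exp (- \<kappa> * sum w {..<N})" using mono \<kappa> by simp
    also have "\<dots> < exp (ln \<epsilon>)"
    proof -
      have "\<kappa> * sum w {..<N} > - ln \<epsilon>" using N \<kappa> by (simp add: field_simps)
      then show ?thesis by simp
    qed
    also have "\<dots> = \<epsilon>" using \<epsilon> by simp
    finally show "(\<Prod>i\<in>{1..n}. \<bar>\<mu> - lam i\<bar> / (\<mu> + lam i)) < \<epsilon>" .
  qed
qed

lemma abs_sum_mult_diff_less:
  fixes c F G :: "'i \<Rightarrow> real"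
  assumes close: "\<And>i. i \<in> I \<Longrightarrow> \<bar>F i - G i\<bar> < \<epsilon> / ((\<Sum>i\<in>I. \<bar>c i\<bar>) + 1)" and \<epsilon>: "\<epsilon> > 0"
  shows "\<bar>(\<Sum>i\<in>I. c i * F i) - (\<Sum>i\<in>I. c i * G i)\<bar> < \<epsilon>"
proof -
  define S where "S = (\<Sum>i\<in>I. \<bar>c i\<bar>)"
  have S: "S \<ge> 0" unfolding S_def by (simp add: sum_nonneg)
  have "\<bar>(\<Sum>i\<in>I. c i * F i) - (\<Sum>i\<in>I. c i * G i)\<bar> = \<bar>\<Sum>i\<in>I. c i * (F i - G i)\<bar>"
    by (simp add: sum_subtractf right_diff_distrib)
  also have "\<dots> \<le> (\<Sum>i\<in>I. \<bar>c i\<bar> * (\<epsilon> / (S + 1)))"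
  proof (intro order_trans[OF sum_abs] sum_mono)
    show "\<bar>c i * (F i - G i)\<bar> \<le> \<bar>c i\<bar> * (\<epsilon> / (S + 1))" if "i \<in> I" for i
      unfolding abs_mult S_def using close[OF that] by (intro mult_left_mono) auto
  qed
  also have "\<dots> = S * (\<epsilon> / (S + 1))" by (simp only: S_def sum_distrib_right)
  also have "\<dots> < \<epsilon>" using S \<epsilon> by (simp add: field_simps)
  finally show ?thesis .
qed

lemma Muntz_power_approx:
  fixes lam :: "nat \<Rightarrow> real" and \<mu> \<epsilon> :: real
  assumes pos: "\<And>i. i \<ge> 1 \<Longrightarrow> lam i > 0" and inj: "inj_on lam {1..}"
    and div: "\<not> summable (\<lambda>i. lam (Suc i) / ((lam (Suc i))\<^sup>2 + 1))"
    and \<mu>: "\<mu> > 0" and \<epsilon>: "\<epsilon> > 0"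
  shows "eventually (\<lambda>n. \<exists>b. \<forall>t\<in>{0..1}.
    \<bar>t powr \<mu> - (\<Sum>i=1..n. b i * t powr lam i)\<bar> < \<epsilon>) sequentially"
proof -
  have "eventually (\<lambda>n. (\<Prod>i\<in>{1..n}. \<bar>\<mu> - lam i\<bar> / (\<mu> + lam i)) < \<epsilon> / 2) sequentially"
  proof (rule eventually_Muntz_product_less[OF pos div \<mu>])
    show "\<epsilon> / 2 > 0" using \<epsilon> by simp
  qed
  then show ?thesis
  proof eventually_elim
    case (elim n)
    define K where "K = lam ` {1..n}"
    have inj_n: "inj_on lam {1..n}" using inj by (rule inj_on_subset) auto
    have K: "finite K" "K \<subseteq> {0<..}" using pos by (auto simp: K_def)
    obtain b where b: "\<And>t. t \<in> {0..1} \<Longrightarrow>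
      \<bar>t powr \<mu> - (\<Sum>l\<in>K. b l * t powr l)\<bar> < (\<Prod>l\<in>K. \<bar>\<mu> - l\<bar> / (\<mu> + l)) + \<epsilon> / 2"
      using Muntz_distance_bound[OF K \<mu>, of "\<epsilon> / 2"] \<epsilon> by auto
    have "(\<Prod>l\<in>K. \<bar>\<mu> - l\<bar> / (\<mu> + l)) = (\<Prod>i\<in>{1..n}. \<bar>\<mu> - lam i\<bar> / (\<mu> + lam i))"
      unfolding K_def by (rule prod.reindex[OF inj_n, unfolded o_def])
    moreover have "(\<Sum>l\<in>K. b l * t powr l) = (\<Sum>i=1..n. b (lam i) * t powr lam i)" for t
      unfolding K_def by (rule sum.reindex[OF inj_n, unfolded o_def])
    ultimately show ?case using b elim by (intro exI[of _ "\<lambda>i. b (lam i)"]) force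
  qed
qed

lemma Muntz_dense:
  fixes lam :: "nat \<Rightarrow> real" and f :: "real \<Rightarrow> real"
  assumes pos: "\<And>i. i \<ge> 1 \<Longrightarrow> lam i > 0" and inj: "inj_on lam {1..}"
    and div: "\<not> summable (\<lambda>i. lam (Suc i) / ((lam (Suc i))\<^sup>2 + 1))"
    and f: "continuous_on {0..1} f" and \<epsilon>: "\<epsilon> > 0"
  shows "\<exists>n\<ge>1. \<exists>c::nat\<Rightarrow>real. \<forall>x\<in>{0..1}.
    \<bar>f x - (c 0 + (\<Sum>i=1..n. c i * x powr lam i))\<bar> < \<epsilon>"
proof -
  obtain g where pg: "polynomial_function g" and fg: "\<forall>x\<in>{0..1::real}. norm (f x - g x) < \<epsilon> / 2"
    using Stone_Weierstrass_polynomial_function[OF compact_Icc f, of "\<epsilon> / 2"] \<epsilon> by auto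
  obtain a M where g: "g = (\<lambda>x. \<Sum>k\<le>M. a k * x ^ k)"
    using pg real_polynomial_function_imp_sum real_polynomial_function_eq by metis
  define \<delta> where "\<delta> = \<epsilon> / 2 / ((\<Sum>k\<in>{1..M}. \<bar>a k\<bar>) + 1)"
  have \<delta>: "\<delta> > 0" unfolding \<delta>_def using \<epsilon> by (simp add: add_nonneg_pos sum_nonneg)
  have "eventually (\<lambda>n. n \<ge> 1 \<and> (\<forall>k\<in>{1..M}. \<exists>b. \<forall>t\<in>{0..1}.
      \<bar>t powr real k - (\<Sum>i=1..n. b i * t powr lam i)\<bar> < \<delta>)) sequentially"
    using Muntz_power_approx[OF pos inj div _ \<delta>]
    by (intro eventually_conj eventually_ge_at_top eventually_ball_finite) auto
  then obtain n where n: "n \<ge> 1" and "\<forall>k\<in>{1..M}. \<exists>b. \<forall>t\<in>{0..1}.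
      \<bar>t powr real k - (\<Sum>i=1..n. b i * t powr lam i)\<bar> < \<delta>"
    by (auto dest: eventually_happens)
  then obtain B where B: "\<And>k t. k \<in> {1..M} \<Longrightarrow> t \<in> {0..1} \<Longrightarrow>
      \<bar>t powr real k - (\<Sum>i=1..n. B k i * t powr lam i)\<bar> < \<delta>"
    by metis
  define c where "c i = (if i = 0 then a 0 else \<Sum>k\<in>{1..M}. a k * B k i)" for i
  show ?thesis
  proof (intro exI[of _ n] conjI n exI[of _ c] ballI)
    fix x :: real assume x: "x \<in> {0..1}"
    have "x ^ k = x powr real k" if "k \<ge> 1" for k
      using x that by (cases "x = 0") (simp_all add: powr_realpow)
    then have gx: "g x = a 0 + (\<Sum>k\<in>{1..M}. a k * x powr real k)"
      unfolding g by (simp add: atMost_atLeast0 sum.atLeast_Suc_atMost)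
    have "(\<Sum>i=1..n. c i * x powr lam i)
        = (\<Sum>i=1..n. \<Sum>k\<in>{1..M}. a k * (B k i * x powr lam i))"
      unfolding c_def by (intro sum.cong) (auto simp: sum_distrib_right mult.assoc)
    also have "\<dots> = (\<Sum>k\<in>{1..M}. a k * (\<Sum>i=1..n. B k i * x powr lam i))"
      by (subst sum.swap) (simp add: sum_distrib_left)
    finally have "\<bar>g x - (c 0 + (\<Sum>i=1..n. c i * x powr lam i))\<bar>
        = \<bar>(\<Sum>k\<in>{1..M}. a k * x powr real k) - (\<Sum>k\<in>{1..M}. a k * (\<Sum>i=1..n. B k i * x powr lam i))\<bar>"
      using gx by (simp add: c_def)
    also have "\<dots> < \<epsilon> / 2"
      using B[OF _ x] \<epsilon> unfolding \<delta>_def by (intro abs_sum_mult_diff_less) auto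
    finally have "\<bar>g x - (c 0 + (\<Sum>i=1..n. c i * x powr lam i))\<bar> < \<epsilon> / 2" .
    moreover have "\<bar>f x - g x\<bar> < \<epsilon> / 2" using fg x by simp
    ultimately show "\<bar>f x - (c 0 + (\<Sum>i=1..n. c i * x powr lam i))\<bar> < \<epsilon>" by linarith
  qed
qed

section \<open>The \<open>q\<close>-Meyer-Konig-Zeller operators\<close>

lemma q_int_0 [simp]: "q_int q 0 = 0" by (simp add: q_int_def)

lemma q_int_Suc: "q_int q (Suc k) = 1 + q * q_int q k"
proof (cases "q = 1")
  case True then show ?thesis by (simp add: q_int_def)
next
  case False then show ?thesis by (simp add: q_int_def field_simps)
qed

lemma q_int_add: "q_int q (a + b) = q_int q a + q ^ a * q_int q b"
  by (induction a) (simp_all add: q_int_Suc algebra_simps)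

lemma q_int_sum: "q_int q k = (\<Sum>j<k. q ^ j)"
proof (induction k)
  case (Suc k)
  have "q_int q (Suc k) = q_int q (k + 1)" by simp
  also have "\<dots> = q_int q k + q ^ k * q_int q 1" by (rule q_int_add)
  finally show ?case using Suc by (simp add: q_int_Suc)
qed simp

lemma q_int_nonneg: "0 \<le> q \<Longrightarrow> 0 \<le> q_int q k"
  unfolding q_int_sum by (intro sum_nonneg) auto

lemma one_le_q_int: assumes "0 \<le> q" "k \<ge> 1" shows "q_int q k \<ge> 1"
proof -
  obtain j where k: "k = Suc j" using assms(2) by (cases k) auto
  show ?thesis unfolding k q_int_Suc using q_int_nonneg[OF assms(1), of j] assms(1) by simp
qed

lemma q_int_mono: assumes "0 \<le> q" "a \<le> b" shows "q_int q a \<le> q_int q b"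
proof -
  obtain c where "b = a + c" using assms(2) le_Suc_ex by blast
  then show ?thesis using q_int_add[of q a c] q_int_nonneg[OF assms(1), of c] assms(1) by simp
qed

lemma q_fact_0 [simp]: "q_fact q 0 = 1"
  by (simp add: q_fact_def)

lemma q_fact_Suc: "q_fact q (Suc n) = q_fact q n * q_int q (Suc n)"
  by (simp add: q_fact_def)

lemma q_fact_pos: "0 \<le> q \<Longrightarrow> q_fact q n > 0"
  unfolding q_fact_def using one_le_q_int by (intro prod_pos) (auto intro: less_le_trans[OF zero_less_one])

definition MKZ_coeff :: "real \<Rightarrow> nat \<Rightarrow> nat \<Rightarrow> real" where
  "MKZ_coeff q n k = q_fact q (n + k) / (q_fact q k * q_fact q n)"

definition MKZ_node :: "real \<Rightarrow> nat \<Rightarrow> nat \<Rightarrow> real" where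
  "MKZ_node q n k = q_int q k / q_int q (k + n)"

definition MKZ_prod :: "real \<Rightarrow> nat \<Rightarrow> real \<Rightarrow> real" where
  "MKZ_prod q n x = (\<Prod>j = 0..n. (1 - q ^ j * x))"

lemma MKZ_series:
  assumes "x \<noteq> 1"
  shows "MKZ n q h x = MKZ_prod q n x * (\<Sum>k. MKZ_coeff q n k * x ^ k * h (MKZ_node q n k))"
  using assms by (simp add: MKZ_def MKZ_prod_def MKZ_coeff_def MKZ_node_def q_binom_def mult.commute)

lemma MKZ_coeff_0 [simp]: "0 \<le> q \<Longrightarrow> MKZ_coeff q n 0 = 1"
  using q_fact_pos[of q n] by (simp add: MKZ_coeff_def)

lemma MKZ_coeff_order_0 [simp]: "0 \<le> q \<Longrightarrow> MKZ_coeff q 0 k = 1"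
  using q_fact_pos[of q k] by (simp add: MKZ_coeff_def)

lemma MKZ_coeff_pos: "0 \<le> q \<Longrightarrow> MKZ_coeff q n k > 0"
  using q_fact_pos[of q] by (simp add: MKZ_coeff_def)

lemma MKZ_coeff_Suc_Suc:
  assumes q: "0 \<le> q"
  shows "MKZ_coeff q (Suc n) (Suc k) = MKZ_coeff q n (Suc k) + q ^ Suc n * MKZ_coeff q (Suc n) k"
proof -
  define F where "F = q_fact q"
  have Fp: "F m > 0" for m unfolding F_def using q_fact_pos[OF q] by simp
  have ik: "q_int q (Suc k) > 0" and inn: "q_int q (Suc n) > 0"
    using one_le_q_int[OF q] by (auto intro: less_le_trans[OF zero_less_one])
  have add: "q_int q (Suc n + Suc k) = q_int q (Suc n) + q ^ Suc n * q_int q (Suc k)"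
    by (rule q_int_add)
  have e1: "F (Suc n + Suc k) = F (n + Suc k) * q_int q (Suc n + Suc k)"
    unfolding F_def by (simp add: q_fact_Suc)
  have e2: "F (Suc n + k) = F (n + Suc k)" by simp
  have e3: "F (Suc k) = F k * q_int q (Suc k)" "F (Suc n) = F n * q_int q (Suc n)"
    unfolding F_def by (simp_all add: q_fact_Suc)
  show ?thesis
    unfolding MKZ_coeff_def F_def[symmetric] e1 e2 e3 add
    using Fp[of k] Fp[of n] ik inn by (simp add: field_simps)
qed

lemma MKZ_coeff_Suc_mult_node:
  assumes q: "0 \<le> q"
  shows "MKZ_coeff q n (Suc k) * MKZ_node q n (Suc k) = MKZ_coeff q n k"
proof -
  define F where "F = q_fact q"
  have Fp: "F m > 0" for m unfolding F_def using q_fact_pos[OF q] by simp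
  have ik: "q_int q (Suc k) > 0" and ikn: "q_int q (Suc k + n) > 0"
    using one_le_q_int[OF q] by (auto intro: less_le_trans[OF zero_less_one])
  have e1: "F (n + Suc k) = F (n + k) * q_int q (Suc k + n)"
    unfolding F_def by (simp add: q_fact_Suc add.commute)
  have e3: "F (Suc k) = F k * q_int q (Suc k)"
    unfolding F_def by (simp add: q_fact_Suc)
  show ?thesis
    unfolding MKZ_coeff_def MKZ_node_def F_def[symmetric] e1 e3
    using Fp[of k] Fp[of n] ik ikn by (simp add: field_simps)
qed

lemma MKZ_node_0 [simp]: "MKZ_node q n 0 = 0"
  by (simp add: MKZ_node_def)

lemma MKZ_at_0:
  assumes "0 \<le> q"
  shows "MKZ n q h 0 = h 0"
proof -
  have "(\<lambda>k. MKZ_coeff q n k * 0 ^ k * h (MKZ_node q n k)) = (\<lambda>k. if k = 0 then h 0 else 0)"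
    using assms by (auto simp: fun_eq_iff)
  then have "(\<Sum>k. MKZ_coeff q n k * 0 ^ k * h (MKZ_node q n k)) = h 0"
    using sums_unique[OF sums_single[of 0 "\<lambda>_. h 0"]] by simp
  moreover have "MKZ_prod q n 0 = 1" by (simp add: MKZ_prod_def)
  ultimately show ?thesis using MKZ_series[of 0 n q h] by simp
qed

lemma MKZ_node_bounds:
  assumes "0 \<le> q" "n \<ge> 1"
  shows "0 \<le> MKZ_node q n k" "MKZ_node q n k \<le> 1"
proof -
  have p: "q_int q (k + n) \<ge> 1" using one_le_q_int[OF assms(1)] assms(2) by simp
  have "q_int q k \<le> q_int q (k + n)" by (rule q_int_mono[OF assms(1)]) simp
  then show "0 \<le> MKZ_node q n k" "MKZ_node q n k \<le> 1"
    unfolding MKZ_node_def using p q_int_nonneg[OF assms(1), of k] by (auto simp: divide_le_eq_1)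
qed

lemma MKZ_node_Suc_diff:
  assumes q: "0 \<le> q" "q \<le> 1" and n: "n \<ge> 1"
  shows "0 \<le> MKZ_node q n (Suc j) - MKZ_node q n j"
    and "MKZ_node q n (Suc j) - MKZ_node q n j \<le> 1 / q_int q n"
proof -
  define a b A B N where "a = q_int q j" and "b = q_int q (j + n)"
    and "A = q_int q (Suc j)" and "B = q_int q (Suc j + n)" and "N = q_int q n"
  have N: "N \<ge> 1" unfolding N_def by (rule one_le_q_int[OF q(1) n])
  have b: "N \<le> b" "b \<le> B" unfolding b_def B_def N_def by (simp_all add: q_int_mono[OF q(1)])
  have qj: "0 \<le> q ^ j" "q ^ j \<le> 1" using q by (auto intro: power_le_one)
  have "A = a + q ^ j" "B = b + q ^ (j + n)" "b = N + q ^ n * a"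
    unfolding a_def b_def A_def B_def N_def
    using q_int_add[of q j 1] q_int_add[of q "j + n" 1] q_int_add[of q n j]
    by (simp_all add: q_int_Suc add.commute)
  then have "A * b - a * B = q ^ j * N" by (simp add: algebra_simps power_add)
  then have diff: "MKZ_node q n (Suc j) - MKZ_node q n j = q ^ j * N / (B * b)"
    using b N by (simp add: MKZ_node_def a_def b_def A_def B_def field_simps)
  have NN: "N * N \<le> B * b" using b N by (intro mult_mono) auto
  have "q ^ j * (N * N) \<le> 1 * (B * b)" by (rule mult_mono[OF qj(2) NN]) (use N in auto)
  then show "0 \<le> MKZ_node q n (Suc j) - MKZ_node q n j"
    and "MKZ_node q n (Suc j) - MKZ_node q n j \<le> 1 / q_int q n"
    unfolding diff N_def[symmetric] using b N qj by (simp_all add: field_simps)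
qed

lemma MKZ_node_sq_le:
  assumes q: "0 \<le> q" "q \<le> 1" and n: "n \<ge> 1"
  shows "(MKZ_node q n k)\<^sup>2 \<le> MKZ_node q n k * MKZ_node q n (k - 1) + 1 / q_int q n"
proof (cases k)
  case 0
  then show ?thesis using one_le_q_int[OF q(1) n] by simp
next
  case (Suc j)
  define t t' where "t = MKZ_node q n (Suc j)" and "t' = MKZ_node q n j"
  have "t * (t - t') \<le> t - t'"
    using MKZ_node_bounds[OF q(1) n] MKZ_node_Suc_diff(1)[OF q n, of j]
    by (intro mult_left_le_one_le) (auto simp: t_def t'_def)
  moreover have "t\<^sup>2 = t * t' + t * (t - t')" by (simp add: power2_eq_square algebra_simps)
  ultimately show ?thesis
    using MKZ_node_Suc_diff(2)[OF q n, of j] Suc by (simp add: t_def t'_def)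
qed

lemma q_power_mult_less_1:
  fixes q x :: real
  assumes "0 \<le> q" "q \<le> 1" "0 \<le> x" "x < 1"
  shows "q ^ j * x < 1"
proof -
  have "q ^ j \<le> 1" using assms by (intro power_le_one) auto
  then have "q ^ j * x \<le> x" using assms by (simp add: mult_left_le_one_le)
  then show ?thesis using assms by simp
qed

lemma MKZ_prod_pos:
  assumes "0 \<le> q" "q \<le> 1" "0 \<le> x" "x < 1"
  shows "MKZ_prod q n x > 0"
  unfolding MKZ_prod_def using q_power_mult_less_1[OF assms] by (intro prod_pos) auto

lemma MKZ_prod_Suc: "MKZ_prod q (Suc n) x = MKZ_prod q n x * (1 - q ^ Suc n * x)"
  by (simp add: MKZ_prod_def)

lemma sums_of_recurrence:
  fixes f g :: "nat \<Rightarrow> real"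
  assumes g: "g sums G" and f0: "f 0 = g 0" and fg: "\<And>k. f (Suc k) = g (Suc k) + c * f k"
    and nonneg: "\<And>k. 0 \<le> f k" "\<And>k. 0 \<le> g k" and c: "0 \<le> c" "c < 1"
  shows "f sums (G / (1 - c))"
proof -
  have gS: "(\<lambda>k. g (Suc k)) sums (G - g 0)"
    using g sums_Suc_iff[of g "G - g 0"] by simp
  have "summable f"
  proof (rule summableI_nonneg_bounded[of f "G / (1 - c)"])
    show "0 \<le> f k" for k by (rule nonneg(1))
    show "sum f {..<N} \<le> G / (1 - c)" for N
    proof -
      have gle: "(\<Sum>k<N. g (Suc k)) \<le> G - g 0"
        using sum_le_suminf[OF sums_summable[OF gS], of "{..<N}"] nonneg sums_unique[OF gS] by auto
      have "sum f {..<Suc N} = f 0 + (\<Sum>k<N. f (Suc k))" by (rule sum.lessThan_Suc_shift)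
      also have "\<dots> = g 0 + (\<Sum>k<N. g (Suc k)) + c * sum f {..<N}"
        unfolding fg f0 by (simp add: sum.distrib sum_distrib_left)
      finally have eq: "sum f {..<Suc N} = g 0 + (\<Sum>k<N. g (Suc k)) + c * sum f {..<N}" .
      define S where "S = sum f {..<Suc N}"
      have mono: "sum f {..<N} \<le> S" using nonneg by (simp add: S_def)
      have "c * sum f {..<N} \<le> c * S" using mono c by (intro mult_left_mono) auto
      then have "(1 - c) * S \<le> G" using eq gle unfolding S_def[symmetric] by argo
      then have "S \<le> G / (1 - c)" using c by (simp add: field_simps)
      then show ?thesis using mono by linarith
    qed
  qed
  then have fV: "f sums suminf f" by (simp add: summable_sums)
  have "(\<lambda>k. f (Suc k)) sums (suminf f - f 0)" using fV sums_Suc_iff[of f "suminf f - f 0"] by simp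
  moreover have "(\<lambda>k. f (Suc k)) sums ((G - g 0) + c * suminf f)"
    unfolding fg by (intro sums_add gS sums_mult fV)
  ultimately have "suminf f - f 0 = (G - g 0) + c * suminf f" by (rule sums_unique2)
  then have "suminf f = G / (1 - c)" using c f0 by (simp add: field_simps)
  then show ?thesis using fV by simp
qed

lemma MKZ_coeff_sums:
  assumes q: "0 \<le> q" "q \<le> 1" and x: "0 \<le> x" "x < 1"
  shows "(\<lambda>k. MKZ_coeff q n k * x ^ k) sums (1 / MKZ_prod q n x)"
proof (induction n)
  case 0
  have "(\<lambda>k. x ^ k) sums (1 / (1 - x))" using x by (intro geometric_sums) auto
  then show ?case using q by (simp add: MKZ_prod_def)
next
  case (Suc n)
  have c: "0 \<le> q ^ Suc n * x" "q ^ Suc n * x < 1"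
    using q x q_power_mult_less_1[OF q x, of "Suc n"] by simp_all
  have "(\<lambda>k. MKZ_coeff q (Suc n) k * x ^ k) sums (1 / MKZ_prod q n x / (1 - q ^ Suc n * x))"
  proof (rule sums_of_recurrence[OF Suc])
    show "MKZ_coeff q (Suc n) (Suc k) * x ^ Suc k
        = MKZ_coeff q n (Suc k) * x ^ Suc k + q ^ Suc n * x * (MKZ_coeff q (Suc n) k * x ^ k)" for k
      unfolding MKZ_coeff_Suc_Suc[OF q(1)] by (simp add: algebra_simps)
  qed (use q x c in \<open>auto intro!: mult_nonneg_nonneg less_imp_le[OF MKZ_coeff_pos[OF q(1)]]\<close>)
  then show ?case unfolding MKZ_prod_Suc by simp
qed

lemma MKZ_first_moment_sums:
  assumes q: "0 \<le> q" "q \<le> 1" and x: "0 \<le> x" "x < 1"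
  shows "(\<lambda>k. MKZ_coeff q n k * x ^ k * MKZ_node q n k) sums (x / MKZ_prod q n x)"
proof -
  have "(\<lambda>k. MKZ_coeff q n (Suc k) * x ^ Suc k * MKZ_node q n (Suc k))
      = (\<lambda>k. x * (MKZ_coeff q n k * x ^ k))"
    using MKZ_coeff_Suc_mult_node[OF q(1)] by (simp add: fun_eq_iff algebra_simps)
  then have "(\<lambda>k. MKZ_coeff q n (Suc k) * x ^ Suc k * MKZ_node q n (Suc k)) sums (x / MKZ_prod q n x)"
    using sums_mult[OF MKZ_coeff_sums[OF q x, of n], of x] by simp
  then show ?thesis using sums_Suc_iff[of "\<lambda>k. MKZ_coeff q n k * x ^ k * MKZ_node q n k"] by simp
qed

lemma MKZ_second_moment_sums:
  assumes q: "0 \<le> q" "q \<le> 1" and x: "0 \<le> x" "x < 1"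
  shows "(\<lambda>k. MKZ_coeff q n k * x ^ k * (MKZ_node q n k * MKZ_node q n (k - 1)))
    sums (x\<^sup>2 / MKZ_prod q n x)"
proof -
  define T where "T k = MKZ_coeff q n k * x ^ k * (MKZ_node q n k * MKZ_node q n (k - 1))" for k
  have "(\<lambda>k. T (Suc (Suc k))) = (\<lambda>k. x\<^sup>2 * (MKZ_coeff q n k * x ^ k))"
    using MKZ_coeff_Suc_mult_node[OF q(1), of n "Suc _"] MKZ_coeff_Suc_mult_node[OF q(1), of n]
    by (simp add: T_def fun_eq_iff power2_eq_square algebra_simps)
  then have "(\<lambda>k. T (Suc (Suc k))) sums (x\<^sup>2 / MKZ_prod q n x)"
    using sums_mult[OF MKZ_coeff_sums[OF q x, of n], of "x\<^sup>2"] by simp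
  then have "T sums (x\<^sup>2 / MKZ_prod q n x)"
    using sums_Suc_iff[of "\<lambda>k. T (Suc k)"] sums_Suc_iff[of T] by (simp add: T_def)
  then show ?thesis unfolding T_def .
qed

text \<open>Korovkin's estimate for a probability distribution \<open>p\<close> on the nodes \<open>t\<close> with mean \<open>x\<close> and
  variance at most \<open>\<delta>\<close>.\<close>

lemma weighted_mean_error_le:
  fixes p t :: "nat \<Rightarrow> real" and h :: "real \<Rightarrow> real"
  assumes p: "\<And>k. 0 \<le> p k" "p sums 1" and t: "\<And>k. t k \<in> {0..1}"
    and m1: "(\<lambda>k. p k * t k) sums x"
    and m2: "summable (\<lambda>k. p k * (t k)\<^sup>2)" "(\<Sum>k. p k * (t k)\<^sup>2) \<le> x\<^sup>2 + \<delta>"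
    and modulus: "\<And>s. s \<in> {0..1} \<Longrightarrow> \<bar>h s - h x\<bar> \<le> e + c * (s - x)\<^sup>2" and c: "0 \<le> c"
  shows "summable (\<lambda>k. p k * h (t k))" "\<bar>(\<Sum>k. p k * h (t k)) - h x\<bar> \<le> e + c * \<delta>"
proof -
  define D where "D k = p k * (h (t k) - h x)" for k
  define E where "E k = p k * e + c * (p k * (t k)\<^sup>2 - 2 * x * (p k * t k) + x\<^sup>2 * p k)" for k
  have DE: "\<bar>D k\<bar> \<le> E k" for k
  proof -
    have "\<bar>D k\<bar> = p k * \<bar>h (t k) - h x\<bar>" using p(1)[of k] by (simp add: D_def abs_mult)
    also have "\<dots> \<le> p k * (e + c * (t k - x)\<^sup>2)" using modulus[OF t] p(1) by (rule mult_left_mono)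
    also have "\<dots> = E k" by (simp add: E_def power2_eq_square algebra_simps)
    finally show ?thesis .
  qed
  have quad: "(\<lambda>k. p k * (t k)\<^sup>2 - 2 * x * (p k * t k) + x\<^sup>2 * p k)
      sums ((\<Sum>k. p k * (t k)\<^sup>2) - 2 * x * x + x\<^sup>2 * 1)"
    using summable_sums[OF m2(1)] sums_mult[OF m1, of "2 * x"] sums_mult[OF p(2), of "x\<^sup>2"]
    by (intro sums_add sums_diff)
  have "E sums (1 * e + c * ((\<Sum>k. p k * (t k)\<^sup>2) - 2 * x * x + x\<^sup>2 * 1))"
    unfolding E_def by (rule sums_add[OF sums_mult2[OF p(2)] sums_mult[OF quad]])
  then have E: "E sums (e + c * ((\<Sum>k. p k * (t k)\<^sup>2) - x\<^sup>2))"
    by (simp add: power2_eq_square)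
  have sD: "summable (\<lambda>k. \<bar>D k\<bar>)"
    using DE by (intro summable_comparison_test'[OF sums_summable[OF E]]) auto
  have "(\<lambda>k. D k + p k * h x) sums ((\<Sum>k. D k) + 1 * h x)"
    using summable_sums[OF summable_rabs_cancel[OF sD]] sums_mult2[OF p(2), of "h x"]
    by (rule sums_add)
  then have h_sums: "(\<lambda>k. p k * h (t k)) sums ((\<Sum>k. D k) + h x)"
    by (simp add: D_def algebra_simps)
  then show "summable (\<lambda>k. p k * h (t k))" by (rule sums_summable)
  have "\<bar>(\<Sum>k. p k * h (t k)) - h x\<bar> = \<bar>\<Sum>k. D k\<bar>" using sums_unique[OF h_sums] by simp
  also have "\<dots> \<le> (\<Sum>k. \<bar>D k\<bar>)" by (rule summable_rabs[OF sD])
  also have "\<dots> \<le> (\<Sum>k. E k)" using DE sD sums_summable[OF E] by (rule suminf_le)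
  also have "\<dots> \<le> e + c * \<delta>"
  proof -
    have "c * ((\<Sum>k. p k * (t k)\<^sup>2) - x\<^sup>2) \<le> c * \<delta>"
      using m2(2) c by (intro mult_left_mono) auto
    then show ?thesis using sums_unique[OF E] by linarith
  qed
  finally show "\<bar>(\<Sum>k. p k * h (t k)) - h x\<bar> \<le> e + c * \<delta>" .
qed

text \<open>For \<open>0 \<le> x < 1\<close> these weights form the probability distribution on the nodes whose mean
  of \<open>h\<close> is \<open>MKZ n q h x\<close>.\<close>

definition MKZ_weight :: "real \<Rightarrow> nat \<Rightarrow> real \<Rightarrow> nat \<Rightarrow> real" where
  "MKZ_weight q n x k = MKZ_prod q n x * (MKZ_coeff q n k * x ^ k)"

lemma MKZ_weight_nonneg:
  assumes "0 \<le> q" "q \<le> 1" "0 \<le> x" "x < 1"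
  shows "0 \<le> MKZ_weight q n x k"
  using MKZ_prod_pos[OF assms] MKZ_coeff_pos[OF assms(1)] assms(3)
  by (simp add: MKZ_weight_def less_imp_le)

lemma MKZ_weight_sums:
  assumes q: "0 \<le> q" "q \<le> 1" and x: "0 \<le> x" "x < 1"
  shows "MKZ_weight q n x sums 1"
  using sums_mult[OF MKZ_coeff_sums[OF q x, of n], of "MKZ_prod q n x"]
    MKZ_prod_pos[OF q x, of n] by (simp add: MKZ_weight_def[abs_def])

lemma MKZ_weight_mean_sums:
  assumes q: "0 \<le> q" "q \<le> 1" and x: "0 \<le> x" "x < 1"
  shows "(\<lambda>k. MKZ_weight q n x k * MKZ_node q n k) sums x"
  using sums_mult[OF MKZ_first_moment_sums[OF q x, of n], of "MKZ_prod q n x"]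
    MKZ_prod_pos[OF q x, of n] by (simp add: MKZ_weight_def mult.assoc)

lemma MKZ_weight_second_moment:
  assumes q: "0 \<le> q" "q \<le> 1" and n: "n \<ge> 1" and x: "0 \<le> x" "x < 1"
  shows "summable (\<lambda>k. MKZ_weight q n x k * (MKZ_node q n k)\<^sup>2)"
    and "(\<Sum>k. MKZ_weight q n x k * (MKZ_node q n k)\<^sup>2) \<le> x\<^sup>2 + 1 / q_int q n"
proof -
  define p t where "p = MKZ_weight q n x" and "t = MKZ_node q n"
  have p: "0 \<le> p k" for k unfolding p_def by (rule MKZ_weight_nonneg[OF q x])
  have m2: "(\<lambda>k. p k * (t k * t (k - 1))) sums x\<^sup>2"
    using sums_mult[OF MKZ_second_moment_sums[OF q x, of n], of "MKZ_prod q n x"]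
      MKZ_prod_pos[OF q x, of n] by (simp add: p_def t_def MKZ_weight_def mult.assoc)
  have bound: "(\<lambda>k. p k * (t k * t (k - 1)) + p k * (1 / q_int q n)) sums (x\<^sup>2 + 1 / q_int q n)"
    using sums_add[OF m2 sums_mult2[OF MKZ_weight_sums[OF q x, of n], of "1 / q_int q n"]]
    by (simp add: p_def)
  have t_sq: "p k * (t k)\<^sup>2 \<le> p k * (t k * t (k - 1)) + p k * (1 / q_int q n)" for k
    using mult_left_mono[OF MKZ_node_sq_le[OF q n, of k] p[of k]] by (simp add: t_def distrib_left)
  show sum: "summable (\<lambda>k. MKZ_weight q n x k * (MKZ_node q n k)\<^sup>2)"
  proof (rule summable_comparison_test'[OF sums_summable[OF MKZ_weight_sums[OF q x]]])
    show "norm (MKZ_weight q n x k * (MKZ_node q n k)\<^sup>2) \<le> MKZ_weight q n x k" for k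
      using MKZ_node_bounds[OF q(1) n, of k] p[of k]
      by (simp add: p_def abs_mult mult_left_le power_le_one)
  qed
  show "(\<Sum>k. MKZ_weight q n x k * (MKZ_node q n k)\<^sup>2) \<le> x\<^sup>2 + 1 / q_int q n"
    using suminf_le[OF t_sq sum[folded p_def t_def] sums_summable[OF bound]] sums_unique[OF bound]
    by (simp add: p_def t_def)
qed

lemma MKZ_eq_weighted_sum:
  assumes q: "0 \<le> q" "q \<le> 1" and x: "0 \<le> x" "x < 1"
    and summable: "summable (\<lambda>k. MKZ_weight q n x k * h (MKZ_node q n k))"
  shows "MKZ n q h x = (\<Sum>k. MKZ_weight q n x k * h (MKZ_node q n k))"
proof -
  define P where "P = MKZ_prod q n x"
  have P: "P \<noteq> 0" using MKZ_prod_pos[OF q x, of n] by (simp add: P_def)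
  have "(\<lambda>k. MKZ_weight q n x k * h (MKZ_node q n k) / P) = (\<lambda>k. MKZ_coeff q n k * x ^ k * h (MKZ_node q n k))"
    using P by (auto simp: MKZ_weight_def P_def)
  then show ?thesis
    using suminf_mult[OF summable_divide[OF summable, of P], of P] P x
    by (simp add: MKZ_series P_def)
qed

lemma MKZ_error_le:
  assumes q: "0 \<le> q" "q \<le> 1" and n: "n \<ge> 1" and x: "x \<in> {0..1}"
    and modulus: "\<And>s. s \<in> {0..1} \<Longrightarrow> \<bar>h s - h x\<bar> \<le> e + c * (s - x)\<^sup>2"
    and c: "0 \<le> c" and e: "0 \<le> e"
  shows "\<bar>MKZ n q h x - h x\<bar> \<le> e + c / q_int q n"
proof (cases "x = 1")
  case True
  then show ?thesis using e c q_int_nonneg[OF q(1), of n] by (simp add: MKZ_def)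
next
  case False
  then have x: "0 \<le> x" "x < 1" using x by auto
  note error = weighted_mean_error_le[OF MKZ_weight_nonneg[OF q x] MKZ_weight_sums[OF q x]
      _ MKZ_weight_mean_sums[OF q x] MKZ_weight_second_moment[OF q n x] modulus c]
  show ?thesis
    using MKZ_node_bounds[OF q(1) n] error MKZ_eq_weighted_sum[OF q x] by simp
qed

lemma continuous_on_quadratic_modulus:
  fixes h :: "real \<Rightarrow> real"
  assumes S: "compact S" and h: "continuous_on S h" and e: "e > 0"
  obtains c where "c \<ge> 0" "\<And>s x. s \<in> S \<Longrightarrow> x \<in> S \<Longrightarrow> \<bar>h s - h x\<bar> \<le> e + c * (s - x)\<^sup>2"
proof -
  obtain B where "B > 0" and B: "\<And>s. s \<in> S \<Longrightarrow> \<bar>h s\<bar> \<le> B"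
    using compact_imp_bounded[OF compact_continuous_image[OF h S]] by (auto simp: bounded_pos)
  obtain \<delta> where \<delta>: "\<delta> > 0"
    and close: "\<And>s x. s \<in> S \<Longrightarrow> x \<in> S \<Longrightarrow> dist s x < \<delta> \<Longrightarrow> dist (h s) (h x) < e"
    using compact_uniformly_continuous[OF h S] e unfolding uniformly_continuous_on_def by metis
  show ?thesis
  proof
    show c: "0 \<le> 2 * B / \<delta>\<^sup>2" using \<open>B > 0\<close> by simp
    fix s x assume s: "s \<in> S" and x: "x \<in> S"
    show "\<bar>h s - h x\<bar> \<le> e + 2 * B / \<delta>\<^sup>2 * (s - x)\<^sup>2"
    proof (cases "\<bar>s - x\<bar> < \<delta>")
      case True
      then have "\<bar>h s - h x\<bar> < e" using close[OF s x] by (simp add: dist_real_def)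
      then show ?thesis using c by (smt (verit) mult_nonneg_nonneg zero_le_power2)
    next
      case False
      then have "\<delta>\<^sup>2 \<le> (s - x)\<^sup>2" using \<delta> by (metis abs_le_square_iff abs_of_pos not_less power2_abs)
      then have "2 * B / \<delta>\<^sup>2 * \<delta>\<^sup>2 \<le> 2 * B / \<delta>\<^sup>2 * (s - x)\<^sup>2" using c by (intro mult_left_mono)
      moreover have "2 * B / \<delta>\<^sup>2 * \<delta>\<^sup>2 = 2 * B" using \<delta> by simp
      moreover have "\<bar>h s - h x\<bar> \<le> 2 * B" using B[OF s] B[OF x] by linarith
      ultimately show ?thesis using e by linarith
    qed
  qed
qed

lemma eventually_q_int_ge:
  fixes q :: "nat \<Rightarrow> real"
  assumes q: "\<And>n. 0 < q n \<and> q n \<le> 1" and lim: "q \<longlonglongrightarrow> 1"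
  shows "eventually (\<lambda>n. q_int (q n) n \<ge> L) sequentially"
proof -
  define K where "K = nat \<lceil>2 * L\<rceil> + 1"
  have "real (nat \<lceil>2 * L\<rceil>) \<ge> 2 * L" by linarith
  then have KL: "real K / 2 \<ge> L" unfolding K_def by simp
  have "(\<lambda>n. q n ^ K) \<longlonglongrightarrow> 1 ^ K" by (intro tendsto_power lim)
  then have "eventually (\<lambda>n. q n ^ K > 1 / 2) sequentially"
    by (intro order_tendstoD) auto
  moreover have "eventually (\<lambda>n. n \<ge> K) sequentially" by (rule eventually_ge_at_top)
  ultimately show ?thesis
  proof eventually_elim
    case (elim n)
    have q0: "0 \<le> q n" "q n \<le> 1" using q[of n] by auto
    \<comment> \<open>\<open>[n]\<^sub>q\<close> has at least \<open>K\<close> terms \<open>q\<^sup>j\<close>, each at least \<open>q\<^sup>K > 1/2\<close>.\<close>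
    have "real K * (1 / 2) \<le> real K * q n ^ K" using elim by (intro mult_left_mono) auto
    also have "\<dots> = (\<Sum>j<K. q n ^ K)" by simp
    also have "\<dots> \<le> (\<Sum>j<K. q n ^ j)" using q0 by (intro sum_mono power_decreasing) auto
    also have "\<dots> \<le> (\<Sum>j<n. q n ^ j)" using elim q0 by (intro sum_mono2) auto
    also have "\<dots> = q_int (q n) n" by (rule q_int_sum[symmetric])
    finally show ?case using KL by linarith
  qed
qed

lemma MKZ_uniform_convergence:
  fixes q :: "nat \<Rightarrow> real" and h :: "real \<Rightarrow> real"
  assumes h: "continuous_on {0..1} h"
    and q: "\<And>n. 0 < q n \<and> q n \<le> 1" and lim: "q \<longlonglongrightarrow> 1" and \<epsilon>: "\<epsilon> > 0"
  shows "eventually (\<lambda>n. \<forall>x\<in>{0..1}. \<bar>MKZ n (q n) h x - h x\<bar> < \<epsilon>) sequentially"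
proof -
  obtain c where c: "c \<ge> 0"
    and modulus: "\<And>s x. s \<in> {0..1} \<Longrightarrow> x \<in> {0..1} \<Longrightarrow> \<bar>h s - h x\<bar> \<le> \<epsilon> / 2 + c * (s - x)\<^sup>2"
    using continuous_on_quadratic_modulus[OF compact_Icc h, of "\<epsilon> / 2"] \<epsilon> by auto
  have "eventually (\<lambda>n. q_int (q n) n \<ge> 2 * c / \<epsilon> + 1 \<and> n \<ge> 1) sequentially"
    by (intro eventually_conj eventually_q_int_ge[OF q lim] eventually_ge_at_top)
  then show ?thesis
  proof eventually_elim
    case (elim n)
    have small: "c / q_int (q n) n < \<epsilon> / 2"
    proof -
      have "2 * c < \<epsilon> * (2 * c / \<epsilon> + 1)" using \<epsilon> by (simp add: field_simps)
      also have "\<dots> \<le> \<epsilon> * q_int (q n) n" using elim \<epsilon> by (intro mult_left_mono) auto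
      finally have "2 * c < \<epsilon> * q_int (q n) n" .
      moreover have "q_int (q n) n > 0"
        using elim c \<epsilon> divide_nonneg_pos[of "2 * c" \<epsilon>] by linarith
      ultimately show ?thesis by (simp add: field_simps)
    qed
    show ?case
    proof
      fix x :: real assume "x \<in> {0..1}"
      then have "\<bar>MKZ n (q n) h x - h x\<bar> \<le> \<epsilon> / 2 + c / q_int (q n) n"
        using q[of n] elim \<epsilon> c by (intro MKZ_error_le modulus) auto
      then show "\<bar>MKZ n (q n) h x - h x\<bar> < \<epsilon>" using small by linarith
    qed
  qed
qed

section \<open>\<open>\<alpha>\<close>-fractal functions\<close>

lemma contraction_bound_le:
  fixes E :: "'a \<Rightarrow> real" and v :: "'a \<Rightarrow> 'a"
  assumes v: "\<And>y. y \<in> S \<Longrightarrow> v y \<in> S" and A: "0 \<le> A" "A < 1" and \<eta>: "0 \<le> \<eta>"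
    and step: "\<And>y. y \<in> S \<Longrightarrow> E y \<le> A * (E (v y) + \<eta>)"
    and bounded: "\<And>y. y \<in> S \<Longrightarrow> E y \<le> B" and y: "y \<in> S"
  shows "E y \<le> A * \<eta> / (1 - A)"
proof -
  have iter: "E y \<le> A ^ k * B + A * \<eta> / (1 - A)" if "y \<in> S" for k y
    using that
  proof (induction k arbitrary: y)
    case 0
    have "A * \<eta> / (1 - A) \<ge> 0" using A \<eta> by simp
    then show ?case using bounded[OF 0] by simp
  next
    case (Suc k)
    have "E y \<le> A * (E (v y) + \<eta>)" by (rule step[OF Suc.prems])
    also have "\<dots> \<le> A * ((A ^ k * B + A * \<eta> / (1 - A)) + \<eta>)"
      using Suc.IH[OF v[OF Suc.prems]] A by (intro mult_left_mono add_right_mono) auto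
    also have "\<dots> = A ^ Suc k * B + A * \<eta> / (1 - A)" using A by (simp add: field_simps)
    finally show ?case .
  qed
  have lim: "(\<lambda>k. A ^ k * B + A * \<eta> / (1 - A)) \<longlonglongrightarrow> 0 * B + A * \<eta> / (1 - A)"
    using A by (intro tendsto_intros LIMSEQ_power_zero) auto
  show ?thesis using tendsto_lowerbound[OF lim, of "E y"] iter[OF y] by simp
qed

locale partition =
  fixes N :: nat and xs :: "nat \<Rightarrow> real"
  assumes N: "N \<ge> 2" and xs_1: "xs 1 = 0" and xs_N: "xs N = 1"
    and xs_less_Suc: "\<And>i. 1 \<le> i \<Longrightarrow> i < N \<Longrightarrow> xs i < xs (Suc i)"
begin

lemma xs_less: "1 \<le> i \<Longrightarrow> i < j \<Longrightarrow> j \<le> N \<Longrightarrow> xs i < xs j"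
proof (induction j)
  case (Suc j)
  then show ?case
    using xs_less_Suc[of j] xs_less_Suc[of i] by (cases "i = j") (auto intro: less_trans)
qed simp

lemma xs_mono: "1 \<le> i \<Longrightarrow> i \<le> j \<Longrightarrow> j \<le> N \<Longrightarrow> xs i \<le> xs j"
  using xs_less by (cases "i = j") (auto intro: less_imp_le)

lemma xs_in_unit: "1 \<le> i \<Longrightarrow> i \<le> N \<Longrightarrow> xs i \<in> {0..1}"
  using xs_mono[of 1 i] xs_mono[of i N] xs_1 xs_N by auto

lemma affine_u_bounds:
  assumes "i \<in> {1..N-1}" "x \<in> {0..1}"
  shows "xs i \<le> affine_u xs i x" "affine_u xs i x \<le> xs (Suc i)" "affine_u xs i x \<in> {0..1}"
proof -
  have "xs i < xs (Suc i)" using xs_less_Suc assms(1) N by auto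
  then have "0 \<le> (xs (Suc i) - xs i) * x" "(xs (Suc i) - xs i) * x \<le> (xs (Suc i) - xs i) * 1"
    using assms(2) by (auto intro: mult_left_mono)
  then show "xs i \<le> affine_u xs i x" "affine_u xs i x \<le> xs (Suc i)" unfolding affine_u_def by auto
  moreover have "xs i \<in> {0..1}" "xs (Suc i) \<in> {0..1}"
    by (rule xs_in_unit; use assms(1) N in auto)+
  ultimately show "affine_u xs i x \<in> {0..1}" by auto
qed

text \<open>\<open>cell\<close> and \<open>cell_coord\<close> invert the covering \<open>[0,1] = \<Union>\<^sub>i affine_u xs i ` [0,1]\<close>;
  at a common endpoint of two cells the later cell is chosen.\<close>

definition cell :: "real \<Rightarrow> nat" where
  "cell y = Max {i \<in> {1..N-1}. xs i \<le> y}"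

definition cell_coord :: "real \<Rightarrow> real" where
  "cell_coord y = (y - xs (cell y)) / (xs (Suc (cell y)) - xs (cell y))"

lemma cell_eqI:
  assumes i: "i \<in> {1..N-1}" and y: "xs i \<le> y" "y < xs (Suc i) \<or> Suc i = N"
  shows "cell y = i"
  unfolding cell_def
proof (rule Max_eqI)
  show "k \<le> i" if k: "k \<in> {k \<in> {1..N-1}. xs k \<le> y}" for k
  proof (rule ccontr)
    assume "\<not> k \<le> i"
    then have "xs (Suc i) \<le> xs k" using k by (intro xs_mono) auto
    then show False using k y(2) \<open>\<not> k \<le> i\<close> by auto
  qed
qed (use i y in auto)

lemma cell_cover:
  assumes y: "y \<in> {0..1}"
  shows "cell y \<in> {1..N-1}" "cell_coord y \<in> {0..1}" "affine_u xs (cell y) (cell_coord y) = y"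
proof -
  define S where "S = {k \<in> {1..N-1}. xs k \<le> y}"
  have "finite S" "1 \<in> S" unfolding S_def using xs_1 y N by auto
  then have iS: "cell y \<in> S" unfolding cell_def S_def[symmetric] using Max_in by auto
  then show i: "cell y \<in> {1..N-1}" unfolding S_def by auto
  have lt: "xs (cell y) < xs (Suc (cell y))" using xs_less_Suc i N by auto
  have "y \<le> xs (Suc (cell y))"
  proof (cases "Suc (cell y) \<le> N - 1")
    case True
    have "Suc (cell y) \<notin> S" using Max_ge[OF \<open>finite S\<close>] unfolding cell_def S_def[symmetric] by force
    then show ?thesis using True unfolding S_def by auto
  next
    case False
    then have "Suc (cell y) = N" using i by auto
    then show ?thesis using y xs_N by auto
  qed
  then show "cell_coord y \<in> {0..1}"
    using iS lt unfolding cell_coord_def S_def by (auto simp: field_simps)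
  show "affine_u xs (cell y) (cell_coord y) = y"
    using lt unfolding cell_coord_def affine_u_def by simp
qed

lemma cell_affine_u:
  assumes i: "i \<in> {1..N-1}" and x: "x \<in> {0..1}"
  shows "cell (affine_u xs i x) = i \<and> cell_coord (affine_u xs i x) = x
    \<or> x = 1 \<and> cell_coord (affine_u xs i x) = 0"
proof -
  have lt: "xs i < xs (Suc i)" using xs_less_Suc i N by auto
  have coord: "cell_coord (affine_u xs i x) = x" if "cell (affine_u xs i x) = i"
    using that lt unfolding cell_coord_def affine_u_def by simp
  consider "x < 1" | "x = 1" "Suc i = N" | "x = 1" "Suc i \<in> {1..N-1}"
    using x i by fastforce
  then show ?thesis
  proof cases
    case 1
    then have "(xs (Suc i) - xs i) * x < (xs (Suc i) - xs i) * 1" using lt by simp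
    then have "cell (affine_u xs i x) = i"
      using affine_u_bounds[OF i x] i by (intro cell_eqI) (auto simp: affine_u_def)
    then show ?thesis using coord by simp
  next
    case 2
    then have "cell (affine_u xs i x) = i"
      using affine_u_bounds[OF i x] i by (intro cell_eqI) auto
    then show ?thesis using coord by simp
  next
    case 3
    then have "cell (affine_u xs i x) = Suc i"
      using xs_less_Suc[of "Suc i"] by (intro cell_eqI) (auto simp: affine_u_def)
    then show ?thesis using 3 unfolding cell_coord_def affine_u_def by simp
  qed
qed

end

text \<open>\<open>Mh\<close> plays the role of the operator \<open>M\<^sub>n\<^sub>,\<^sub>q h\<close>.  The endpoint conditions on \<open>Mh\<close> make the
  two self-referential equations at a common point \<open>xs (Suc i)\<close> of adjacent cells agree.\<close>

locale fractal_setting = partition +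
  fixes \<alpha> :: "nat \<Rightarrow> real \<Rightarrow> real" and h Mh :: "real \<Rightarrow> real" and A B :: real
  assumes A: "0 \<le> A" "A < 1"
    and \<alpha>_le: "\<And>i x. i \<in> {1..N-1} \<Longrightarrow> x \<in> {0..1} \<Longrightarrow> \<bar>\<alpha> i x\<bar> \<le> A"
    and h_le: "\<And>x. x \<in> {0..1} \<Longrightarrow> \<bar>h x\<bar> \<le> B"
    and Mh_le: "\<And>x. x \<in> {0..1} \<Longrightarrow> \<bar>Mh x\<bar> \<le> B"
    and Mh_0: "Mh 0 = h 0" and Mh_1: "Mh 1 = h 1"
begin

definition self_referential :: "(real \<Rightarrow> real) \<Rightarrow> bool" where
  "self_referential G \<longleftrightarrow> bounded (G ` {0..1}) \<and> (\<forall>x. x \<notin> {0..1} \<longrightarrow> G x = 0) \<and>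
    (\<forall>i \<in> {1..N-1}. \<forall>x \<in> {0..1}.
      G (affine_u xs i x) = h (affine_u xs i x) + \<alpha> i x * (G x - Mh x))"

lemma self_referential_cell:
  assumes "self_referential G" "y \<in> {0..1}"
  shows "G y = h y + \<alpha> (cell y) (cell_coord y) * (G (cell_coord y) - Mh (cell_coord y))"
  using assms cell_cover[OF assms(2)] unfolding self_referential_def by metis

lemma self_referential_bounded:
  assumes "self_referential G"
  obtains C where "\<And>y. y \<in> {0..1} \<Longrightarrow> \<bar>G y\<bar> \<le> C"
proof -
  obtain C where "\<forall>x\<in>G ` {0..1}. norm x \<le> C"
    using assms unfolding self_referential_def bounded_iff by blast
  then show ?thesis using that[of C] by auto
qed

lemma self_referential_dist_le:
  assumes G: "self_referential G" and \<eta>: "\<And>x. x \<in> {0..1} \<Longrightarrow> \<bar>h x - Mh x\<bar> \<le> \<eta>"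
    and y: "y \<in> {0..1}"
  shows "\<bar>G y - h y\<bar> \<le> A * \<eta> / (1 - A)"
proof -
  obtain C where C: "\<And>y. y \<in> {0..1} \<Longrightarrow> \<bar>G y\<bar> \<le> C"
    using self_referential_bounded[OF G] by blast
  show ?thesis
  proof (rule contraction_bound_le[where v = cell_coord and E = "\<lambda>y. \<bar>G y - h y\<bar>"])
    show "\<bar>G y - h y\<bar> \<le> A * (\<bar>G (cell_coord y) - h (cell_coord y)\<bar> + \<eta>)" if "y \<in> {0..1}" for y
    proof -
      have c: "cell_coord y \<in> {0..1}" "cell y \<in> {1..N-1}" using cell_cover[OF that] by auto
      have "\<bar>G (cell_coord y) - Mh (cell_coord y)\<bar> \<le> \<bar>G (cell_coord y) - h (cell_coord y)\<bar> + \<eta>"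
        using \<eta>[OF c(1)] by linarith
      then have "\<bar>\<alpha> (cell y) (cell_coord y)\<bar> * \<bar>G (cell_coord y) - Mh (cell_coord y)\<bar>
          \<le> A * (\<bar>G (cell_coord y) - h (cell_coord y)\<bar> + \<eta>)"
        using \<alpha>_le[OF c(2,1)] A by (intro mult_mono) auto
      then show ?thesis using self_referential_cell[OF G that] by (simp add: abs_mult)
    qed
    show "\<bar>G y - h y\<bar> \<le> C + B" if "y \<in> {0..1}" for y
      using C[OF that] h_le[OF that] by linarith
  qed (use A \<eta>[of 0] y cell_cover in auto)
qed

lemma self_referential_unique:
  assumes G: "self_referential G" and G': "self_referential G'"
  shows "G = G'"
proof
  fix y
  show "G y = G' y"
  proof (cases "y \<in> {0..1}")
    case False
    then show ?thesis using G G' unfolding self_referential_def by auto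
  next
    case True
    obtain C C' where C: "\<And>y. y \<in> {0..1} \<Longrightarrow> \<bar>G y\<bar> \<le> C" and C': "\<And>y. y \<in> {0..1} \<Longrightarrow> \<bar>G' y\<bar> \<le> C'"
      using self_referential_bounded[OF G] self_referential_bounded[OF G'] by metis
    have "\<bar>G y - G' y\<bar> \<le> A * 0 / (1 - A)"
    proof (rule contraction_bound_le[where v = cell_coord and E = "\<lambda>y. \<bar>G y - G' y\<bar>"])
      show "\<bar>G y - G' y\<bar> \<le> A * (\<bar>G (cell_coord y) - G' (cell_coord y)\<bar> + 0)" if "y \<in> {0..1}" for y
      proof -
        have c: "cell_coord y \<in> {0..1}" "cell y \<in> {1..N-1}" using cell_cover[OF that] by auto
        have "\<bar>G y - G' y\<bar> = \<bar>\<alpha> (cell y) (cell_coord y)\<bar> * \<bar>G (cell_coord y) - G' (cell_coord y)\<bar>"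
          using self_referential_cell[OF G that] self_referential_cell[OF G' that]
          by (simp add: abs_mult[symmetric] algebra_simps)
        also have "\<dots> \<le> A * \<bar>G (cell_coord y) - G' (cell_coord y)\<bar>"
          using \<alpha>_le[OF c(2,1)] by (intro mult_right_mono) auto
        finally show ?thesis by simp
      qed
      show "\<bar>G y - G' y\<bar> \<le> C + C'" if "y \<in> {0..1}" for y
        using C[OF that] C'[OF that] by linarith
    qed (use A True cell_cover in auto)
    then show ?thesis by simp
  qed
qed

definition fractal_step :: "(real \<Rightarrow> real) \<Rightarrow> real \<Rightarrow> real" where
  "fractal_step g y = (if y \<in> {0..1}
     then h y + \<alpha> (cell y) (cell_coord y) * (g (cell_coord y) - Mh (cell_coord y)) else 0)"

definition fractal_iter :: "nat \<Rightarrow> real \<Rightarrow> real" where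
  "fractal_iter k = (fractal_step ^^ k) (\<lambda>y. if y \<in> {0..1} then h y else 0)"

lemma fractal_iter_Suc: "fractal_iter (Suc k) = fractal_step (fractal_iter k)"
  by (simp add: fractal_iter_def)

lemma fractal_step_outside: "y \<notin> {0..1} \<Longrightarrow> fractal_step g y = 0"
  by (auto simp: fractal_step_def)

lemma fractal_iter_outside: "y \<notin> {0..1} \<Longrightarrow> fractal_iter k y = 0"
  by (cases k) (auto simp: fractal_iter_def fractal_step_outside)

lemma fractal_iter_Suc_dist: "\<bar>fractal_iter (Suc k) y - fractal_iter k y\<bar> \<le> 2 * B * A ^ k"
proof (induction k arbitrary: y)
  case 0
  show ?case
  proof (cases "y \<in> {0..1}")
    case True
    have c: "cell_coord y \<in> {0..1}" "cell y \<in> {1..N-1}" using cell_cover[OF True] by auto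
    have "\<bar>fractal_iter 1 y - fractal_iter 0 y\<bar>
        = \<bar>\<alpha> (cell y) (cell_coord y)\<bar> * \<bar>h (cell_coord y) - Mh (cell_coord y)\<bar>"
      using True c by (simp add: fractal_iter_def fractal_step_def abs_mult)
    also have "\<dots> \<le> 1 * (2 * B)"
      using \<alpha>_le[OF c(2,1)] A h_le[OF c(1)] Mh_le[OF c(1)] by (intro mult_mono) auto
    finally show ?thesis by simp
  next
    case False
    then show ?thesis using h_le[of 0] by (simp add: fractal_iter_outside)
  qed
next
  case (Suc k)
  show ?case
  proof (cases "y \<in> {0..1}")
    case True
    have c: "cell_coord y \<in> {0..1}" "cell y \<in> {1..N-1}" using cell_cover[OF True] by auto
    have "\<bar>fractal_iter (Suc (Suc k)) y - fractal_iter (Suc k) y\<bar>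
        = \<bar>\<alpha> (cell y) (cell_coord y)\<bar> * \<bar>fractal_iter (Suc k) (cell_coord y) - fractal_iter k (cell_coord y)\<bar>"
      using True unfolding fractal_iter_Suc[of "Suc k"] fractal_iter_Suc[of k]
      by (simp add: fractal_step_def abs_mult[symmetric] algebra_simps)
    also have "\<dots> \<le> A * (2 * B * A ^ k)"
      using \<alpha>_le[OF c(2,1)] Suc.IH[of "cell_coord y"] by (intro mult_mono) auto
    finally show ?thesis by (simp add: algebra_simps)
  next
    case False
    then show ?thesis using h_le[of 0] A by (simp add: fractal_iter_outside)
  qed
qed

definition fractal_limit :: "real \<Rightarrow> real" where
  "fractal_limit y = fractal_iter 0 y + (\<Sum>k. fractal_iter (Suc k) y - fractal_iter k y)"

lemma summable_fractal_iter_diff: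
  "summable (\<lambda>k. \<bar>fractal_iter (Suc k) y - fractal_iter k y\<bar>)"
  using A fractal_iter_Suc_dist
  by (intro summable_comparison_test'[OF summable_mult[OF summable_geometric]]) auto

lemma fractal_iter_tendsto: "(\<lambda>k. fractal_iter k y) \<longlonglongrightarrow> fractal_limit y"
proof -
  have "summable (\<lambda>k. fractal_iter (Suc k) y - fractal_iter k y)"
    by (rule summable_rabs_cancel[OF summable_fractal_iter_diff])
  then have "(\<lambda>n. fractal_iter 0 y + (\<Sum>k<n. fractal_iter (Suc k) y - fractal_iter k y))
      \<longlonglongrightarrow> fractal_limit y"
    unfolding fractal_limit_def by (rule tendsto_add[OF tendsto_const summable_LIMSEQ])
  moreover have "fractal_iter 0 y + (\<Sum>k<n. fractal_iter (Suc k) y - fractal_iter k y) = fractal_iter n y"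
    for n using sum_lessThan_telescope[of "\<lambda>k. fractal_iter k y" n] by simp
  ultimately show ?thesis by simp
qed

lemma fractal_limit_bound: "\<bar>fractal_limit y\<bar> \<le> B + 2 * B / (1 - A)"
proof -
  have "\<bar>\<Sum>k. fractal_iter (Suc k) y - fractal_iter k y\<bar> \<le> (\<Sum>k. \<bar>fractal_iter (Suc k) y - fractal_iter k y\<bar>)"
    by (rule summable_rabs[OF summable_fractal_iter_diff])
  also have "\<dots> \<le> (\<Sum>k. 2 * B * A ^ k)"
    using A by (intro suminf_le[OF fractal_iter_Suc_dist summable_fractal_iter_diff]
        summable_mult summable_geometric) auto
  also have "\<dots> = 2 * B / (1 - A)"
    using A by (simp add: suminf_mult suminf_geometric divide_inverse)
  finally show ?thesis
    using h_le[of y] h_le[of 0] unfolding fractal_limit_def by (auto simp: fractal_iter_def)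
qed

lemma fractal_step_fractal_limit: "fractal_step fractal_limit y = fractal_limit y"
proof -
  have "(\<lambda>k. fractal_iter (Suc k) y) \<longlonglongrightarrow> fractal_step fractal_limit y"
  proof (cases "y \<in> {0..1}")
    case True
    have "(\<lambda>k. h y + \<alpha> (cell y) (cell_coord y) * (fractal_iter k (cell_coord y) - Mh (cell_coord y)))
        \<longlonglongrightarrow> h y + \<alpha> (cell y) (cell_coord y) * (fractal_limit (cell_coord y) - Mh (cell_coord y))"
      by (intro tendsto_add tendsto_const tendsto_mult tendsto_diff fractal_iter_tendsto)
    then show ?thesis using True by (simp add: fractal_iter_Suc fractal_step_def)
  qed (simp add: fractal_iter_Suc fractal_step_outside)
  moreover have "(\<lambda>k. fractal_iter (Suc k) y) \<longlonglongrightarrow> fractal_limit y"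
    by (rule LIMSEQ_Suc[OF fractal_iter_tendsto])
  ultimately show ?thesis using LIMSEQ_unique by blast
qed

lemma self_referential_fractal_limit: "self_referential fractal_limit"
proof -
  define G where "G = fractal_limit"
  have cell_eq: "G y = h y + \<alpha> (cell y) (cell_coord y) * (G (cell_coord y) - Mh (cell_coord y))"
    if "y \<in> {0..1}" for y
    using fractal_step_fractal_limit[of y] that by (simp add: G_def fractal_step_def)
  have endpoint: "G t = h t" if "G t = h t + a * (G t - h t)" "\<bar>a\<bar> \<le> A" for t a
  proof -
    have "(1 - a) * (G t - h t) = 0" using that(1) by (simp add: algebra_simps)
    moreover have "a \<noteq> 1" using that(2) A by auto
    ultimately show ?thesis by simp
  qed
  have N1: "1 \<in> {1..N-1}" "N - 1 \<in> {1..N-1}" using N by auto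
  have "cell 0 = 1" using N xs_1 xs_less_Suc[of 1] by (intro cell_eqI) auto
  then have "cell_coord 0 = 0" using xs_1 by (simp add: cell_coord_def)
  then have G0: "G 0 = h 0"
    using cell_eq[of 0] Mh_0 \<alpha>_le[OF N1(1), of 0] \<open>cell 0 = 1\<close> by (intro endpoint) auto
  have "xs (N - 1) < 1" using xs_less[of "N - 1" N] N xs_N by auto
  then have "cell 1 = N - 1" using N by (intro cell_eqI) auto
  then have "cell_coord 1 = 1" using N xs_N \<open>xs (N - 1) < 1\<close> by (simp add: cell_coord_def)
  then have G1: "G 1 = h 1"
    using cell_eq[of 1] Mh_1 \<alpha>_le[OF N1(2), of 1] \<open>cell 1 = N - 1\<close> by (intro endpoint) auto
  have "G (affine_u xs i x) = h (affine_u xs i x) + \<alpha> i x * (G x - Mh x)"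
    if i: "i \<in> {1..N-1}" and x: "x \<in> {0..1}" for i x
    using cell_affine_u[OF i x]
  proof
    assume "cell (affine_u xs i x) = i \<and> cell_coord (affine_u xs i x) = x"
    then show ?thesis using cell_eq[OF affine_u_bounds(3)[OF i x]] by simp
  next
    assume "x = 1 \<and> cell_coord (affine_u xs i x) = 0"
    then have x1: "x = 1" and c: "cell_coord (affine_u xs i x) = 0" by auto
    have "G (affine_u xs i x) = h (affine_u xs i x)"
      using cell_eq[OF affine_u_bounds(3)[OF i x]] G0 Mh_0 unfolding c by simp
    then show ?thesis using x1 G1 Mh_1 by simp
  qed
  moreover have "bounded (G ` {0..1})"
    unfolding bounded_iff G_def using fractal_limit_bound by (intro exI[of _ "B + 2 * B / (1 - A)"]) auto
  moreover have "G y = 0" if "y \<notin> {0..1}" for y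
    using fractal_step_fractal_limit[of y] fractal_step_outside[OF that] by (simp add: G_def)
  ultimately show ?thesis unfolding self_referential_def G_def by blast
qed

lemma self_referential_The: "self_referential (THE G. self_referential G)"
proof -
  have "\<exists>!G. self_referential G"
    using self_referential_fractal_limit self_referential_unique by (intro ex1I) auto
  then show ?thesis by (rule theI')
qed

end

section \<open>Fractal Muntz polynomials\<close>

lemma fractal_fun_MKZ_dist_le:
  assumes P: "partition N xs" and q: "0 \<le> q" and A: "0 \<le> A" "A < 1"
    and \<alpha>: "\<And>i x. i \<in> {1..N-1} \<Longrightarrow> x \<in> {0..1} \<Longrightarrow> \<bar>\<alpha> i x\<bar> \<le> A"
    and h: "\<And>x. x \<in> {0..1} \<Longrightarrow> \<bar>h x\<bar> \<le> B"
    and \<eta>: "\<And>x. x \<in> {0..1} \<Longrightarrow> \<bar>h x - MKZ n q h x\<bar> \<le> \<eta>"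
    and x: "x \<in> {0..1}"
  shows "\<bar>fractal_fun N xs \<alpha> q n h x - h x\<bar> \<le> A * \<eta> / (1 - A)"
proof -
  have "0 \<le> \<eta>" using \<eta>[of 0] by simp
  have "fractal_setting N xs \<alpha> h (MKZ n q h) A (B + \<eta>)"
  proof (intro fractal_setting.intro[OF P] fractal_setting_axioms.intro)
    show "\<bar>h x\<bar> \<le> B + \<eta>" if "x \<in> {0..1}" for x using h[OF that] \<open>0 \<le> \<eta>\<close> by linarith
    show "\<bar>MKZ n q h x\<bar> \<le> B + \<eta>" if "x \<in> {0..1}" for x using h[OF that] \<eta>[OF that] by linarith
    show "MKZ n q h 0 = h 0" by (rule MKZ_at_0[OF q])
    show "MKZ n q h 1 = h 1" by (simp add: MKZ_def)
  qed (use A \<alpha> in auto)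
  then interpret fractal_setting N xs \<alpha> h "MKZ n q h" A "B + \<eta>" .
  have "fractal_fun N xs \<alpha> q n h = (THE G. self_referential G)"
    unfolding fractal_fun_def self_referential_def ..
  then show ?thesis using self_referential_dist_le[OF self_referential_The \<eta> x] by simp
qed

lemma fractal_fun_uniform_convergence:
  fixes q :: "nat \<Rightarrow> real" and h :: "real \<Rightarrow> real"
  assumes P: "partition N xs" and q: "\<And>n. 0 < q n \<and> q n \<le> 1" and lim: "q \<longlonglongrightarrow> 1"
    and A: "0 \<le> A" "A < 1"
    and \<alpha>: "\<And>i x. i \<in> {1..N-1} \<Longrightarrow> x \<in> {0..1} \<Longrightarrow> \<bar>\<alpha> i x\<bar> \<le> A"
    and h: "continuous_on {0..1} h" and \<epsilon>: "\<epsilon> > 0"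
  shows "eventually (\<lambda>n. \<forall>x\<in>{0..1}. \<bar>fractal_fun N xs \<alpha> (q n) n h x - h x\<bar> < \<epsilon>) sequentially"
proof -
  obtain B where "\<forall>y\<in>h ` {0..1}. norm y \<le> B"
    using compact_imp_bounded[OF compact_continuous_image[OF h compact_Icc]] bounded_iff by blast
  then have B: "\<And>x. x \<in> {0..1} \<Longrightarrow> \<bar>h x\<bar> \<le> B" by auto
  define \<eta> where "\<eta> = \<epsilon> * (1 - A) / 2"
  have "\<eta> > 0" unfolding \<eta>_def using \<epsilon> A by simp
  with MKZ_uniform_convergence[OF h q lim]
  have "eventually (\<lambda>n. \<forall>x\<in>{0..1}. \<bar>MKZ n (q n) h x - h x\<bar> < \<eta>) sequentially" .
  then show ?thesis
  proof eventually_elim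
    case (elim n)
    have "\<bar>fractal_fun N xs \<alpha> (q n) n h x - h x\<bar> \<le> A * \<eta> / (1 - A)" if "x \<in> {0..1}" for x
      using elim q[of n] by (intro fractal_fun_MKZ_dist_le[OF P _ A \<alpha> B _ that])
        (auto simp: abs_minus_commute less_imp_le)
    moreover have "A * \<eta> / (1 - A) < \<epsilon>"
    proof -
      have "A * \<eta> / (1 - A) = A * (\<epsilon> / 2)" unfolding \<eta>_def using A by (simp add: field_simps)
      also have "\<dots> \<le> \<epsilon> / 2" using A \<epsilon> by (simp add: mult_left_le_one_le)
      finally show ?thesis using \<epsilon> by linarith
    qed
    ultimately show ?case by (meson order_le_less_trans)
  qed
qed

lemma fractal_fun_uniform_convergence_finite:
  fixes q :: "nat \<Rightarrow> real" and h :: "'i \<Rightarrow> real \<Rightarrow> real"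
  assumes P: "partition N xs" and q: "\<And>n. 0 < q n \<and> q n \<le> 1" and lim: "q \<longlonglongrightarrow> 1"
    and A: "0 \<le> A" "A < 1"
    and \<alpha>: "\<And>i x. i \<in> {1..N-1} \<Longrightarrow> x \<in> {0..1} \<Longrightarrow> \<bar>\<alpha> i x\<bar> \<le> A"
    and I: "finite I" and h: "\<And>i. i \<in> I \<Longrightarrow> continuous_on {0..1} (h i)" and \<epsilon>: "\<epsilon> > 0"
  obtains n where "n \<ge> 1"
    "\<And>i x. i \<in> I \<Longrightarrow> x \<in> {0..1} \<Longrightarrow> \<bar>fractal_fun N xs \<alpha> (q n) n (h i) x - h i x\<bar> < \<epsilon>"
proof -
  have "eventually (\<lambda>n. n \<ge> 1 \<and> (\<forall>i\<in>I. \<forall>x\<in>{0..1}.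
      \<bar>fractal_fun N xs \<alpha> (q n) n (h i) x - h i x\<bar> < \<epsilon>)) sequentially"
    using I h \<epsilon> by (intro eventually_conj eventually_ge_at_top eventually_ball_finite ballI
        fractal_fun_uniform_convergence[OF P q lim A \<alpha>])
  then show ?thesis using that by (auto dest: eventually_happens)
qed

lemma uniform_bound_of_SUP_less_1:
  fixes f :: "'i \<Rightarrow> 'a \<Rightarrow> real"
  assumes I: "finite I" and f: "\<And>i. i \<in> I \<Longrightarrow> bounded (f i ` S) \<and> (SUP x\<in>S. \<bar>f i x\<bar>) < 1"
  obtains A where "0 \<le> A" "A < 1" "\<And>i x. i \<in> I \<Longrightarrow> x \<in> S \<Longrightarrow> \<bar>f i x\<bar> \<le> A"
proof
  define A where "A = Max (insert 0 ((\<lambda>i. SUP x\<in>S. \<bar>f i x\<bar>) ` I))"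
  show "0 \<le> A" using I by (simp add: A_def)
  show "A < 1" using I f by (simp add: A_def)
  show "\<bar>f i x\<bar> \<le> A" if i: "i \<in> I" and x: "x \<in> S" for i x
  proof -
    obtain b where "\<forall>y\<in>f i ` S. norm y \<le> b" using f[OF i] bounded_iff by blast
    then have "bdd_above ((\<lambda>x. \<bar>f i x\<bar>) ` S)" by (intro bdd_aboveI[of _ b]) auto
    then have "\<bar>f i x\<bar> \<le> (SUP x\<in>S. \<bar>f i x\<bar>)" by (rule cSUP_upper[OF x])
    also have "\<dots> \<le> A" using I i by (simp add: A_def)
    finally show ?thesis .
  qed
qed

theorem theorem5p1:
  fixes N :: nat and xs :: "nat \<Rightarrow> real" and q :: "nat \<Rightarrow> real"
    and \<alpha> :: "nat \<Rightarrow> real \<Rightarrow> real" and lam :: "nat \<Rightarrow> real"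
  assumes N: "N \<ge> 2"
    and part: "xs 1 = 0" "xs N = 1" "\<And>i. 1 \<le> i \<Longrightarrow> i < N \<Longrightarrow> xs i < xs (Suc i)"
    and q_range: "\<And>n. 0 < q n \<and> q n \<le> 1"
    and q_lim: "q \<longlonglongrightarrow> 1"
    and alpha_norm: "\<And>i. i \<in> {1..N-1} \<Longrightarrow>
          bounded ((\<alpha> i) ` {0..1}) \<and> (SUP x\<in>{0..1}. \<bar>\<alpha> i x\<bar>) < 1"
    and lam_pos: "\<And>i. i \<ge> 1 \<Longrightarrow> lam i > 0"
    and lam_distinct: "inj_on lam {1..}"
    and lam_div: "\<not> summable (\<lambda>i. lam (Suc i) / ((lam (Suc i))\<^sup>2 + 1))"
    and f_cont: "continuous_on {0..1} f"
    and eps: "\<epsilon> > 0"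
  shows "\<exists>n\<ge>1. \<exists>m\<ge>1. \<exists>c :: nat \<Rightarrow> real.
           \<forall>x\<in>{0..1::real}. \<bar>f x - (c 0 + (\<Sum>i = 1..m.
               c i * fractal_fun N xs \<alpha> (q n) n (\<lambda>t. t powr lam i) x))\<bar> < \<epsilon>"
proof -
  have P: "partition N xs" using N part by unfold_locales
  obtain A where A: "0 \<le> A" "A < 1" and \<alpha>: "\<And>i x. i \<in> {1..N-1} \<Longrightarrow> x \<in> {0..1} \<Longrightarrow> \<bar>\<alpha> i x\<bar> \<le> A"
    using uniform_bound_of_SUP_less_1[of "{1..N-1}" \<alpha> "{0..1}"] alpha_norm by auto
  obtain m c where m: "m \<ge> 1"
    and Muntz: "\<forall>x\<in>{0..1}. \<bar>f x - (c 0 + (\<Sum>i=1..m. c i * x powr lam i))\<bar> < \<epsilon> / 2"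
    using Muntz_dense[OF lam_pos lam_distinct lam_div f_cont, of "\<epsilon> / 2"] eps by auto
  define \<delta> where "\<delta> = \<epsilon> / 2 / ((\<Sum>i=1..m. \<bar>c i\<bar>) + 1)"
  have "continuous_on {0..1} (\<lambda>t. t powr lam i)" if "i \<in> {1..m}" for i
    using lam_pos[of i] that by (intro continuous_on_powr') (auto intro: continuous_intros)
  moreover have "\<delta> > 0" unfolding \<delta>_def using eps by (simp add: add_nonneg_pos sum_nonneg)
  ultimately obtain n where n: "n \<ge> 1" and close: "\<And>i x. i \<in> {1..m} \<Longrightarrow> x \<in> {0..1} \<Longrightarrow>
      \<bar>fractal_fun N xs \<alpha> (q n) n (\<lambda>t. t powr lam i) x - x powr lam i\<bar> < \<delta>"
    using fractal_fun_uniform_convergence_finite[where \<alpha> = \<alpha> and I = "{1..m}"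
        and h = "\<lambda>i t. t powr lam i" and \<epsilon> = \<delta>, OF P q_range q_lim A \<alpha>] by auto
  show ?thesis
  proof (rule exI[of _ n], intro conjI n exI[of _ m] m exI[of _ c] ballI)
    fix x :: real assume x: "x \<in> {0..1}"
    have "\<bar>(\<Sum>i=1..m. c i * fractal_fun N xs \<alpha> (q n) n (\<lambda>t. t powr lam i) x)
        - (\<Sum>i=1..m. c i * x powr lam i)\<bar> < \<epsilon> / 2"
      using close[OF _ x] eps unfolding \<delta>_def by (intro abs_sum_mult_diff_less) auto
    moreover have "\<bar>f x - (c 0 + (\<Sum>i=1..m. c i * x powr lam i))\<bar> < \<epsilon> / 2" using Muntz x by blast
    ultimately show "\<bar>f x - (c 0 + (\<Sum>i=1..m. c i * fractal_fun N xs \<alpha> (q n) n (\<lambda>t. t powr lam i) x))\<bar> < \<epsilon>"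
      by linarith
  qed
qed

end
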